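(* Let $f:\mathbb{R}^n\to\mathbb{R}$ be differentiable with $L_f$-Lipschitz continuous gradient, let $g:\mathbb{R}^n\to\mathbb{R}\cup\{+\infty\}$ be proper, lower semicontinuous and $\gamma_g$-prox-bounded, assume $\operatorname{argmin}\varphi\neq\emptyset$ where $\varphi=f+g$, and let $x^\star$ be a critical point. Suppose $\nabla^2 f$ exists and is continuous around $x^\star$, and that $g$ is prox-regular at $x^\star$ for $-\nabla f(x^\star)$ and twice epi-differentiable at $x^\star$ for $-\nabla f(x^\star)$ with generalized quadratic second-order epi-derivative. Then for $\gamma>0$ sufficiently small, $$\big(\forall s\in\mathbb{R}^n:\ \mathrm d^2\varphi(x^\star,0)(s)\ge0\big)\iff\big(\forall s\in\mathbb{R}^n:\ \langle\nabla^2\varphi_\gamma(x^\star)s,s\rangle\ge0\big).$$ Consequently, $x^\star$ is a second-order stationary point of $\varphi$ if and only if it is a second-order stationary point of $\varphi_\gamma$.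
   Context: $\gamma_g$-prox-bounded: $g+\frac1{2\gamma}\|\cdot\|^2$ bounded below for each $\gamma\in(0,\gamma_g)$. $\operatorname{prox}_{\gamma g}(x)=\operatorname{argmin}_z\{g(z)+\frac1{2\gamma}\|z-x\|^2\}$; $x^\star$ is critical if $x^\star\in\operatorname{prox}_{\gamma g}(x^\star-\gamma\nabla f(x^\star))$ for some $\gamma\in(0,\gamma_g)$. Forward-backward envelope: $\varphi_\gamma(x)=\inf_u\{f(x)+\langle\nabla f(x),u-x\rangle+g(u)+\frac1{2\gamma}\|u-x\|^2\}$; under the hypotheses, $\varphi_\gamma$ is twice differentiable at $x^\star$ for small $\gamma$, and $\nabla^2\varphi_\gamma(x^\star)$ is its Hessian. Prox-regularity of $g$ at $\bar x$ for $\bar v\in\partial g(\bar x)$: there exist $r\ge0,\epsilon>0$ with $g(x')\ge g(x)+\langle v,x'-x\rangle-\frac r2\|x'-x\|^2$ for all $x'\in\mathcal B(\bar x;\epsilon)$ and all $(x,v)\in\operatorname{gph}\partial g$ with $\|x-\bar x\|<\epsilon$, $\|v-\bar v\|<\epsilon$, $g(x)\le g(\bar x)+\epsilon$. Twice epi-differentiability is in the sense of Rockafellar–Wets (Def. 13.6); the second-order epi-derivative is generalized quadratic if it has the form $s\mapsto\langle s,Ms\rangle+\delta_S(s)$ for a subspace $S$ and matrix $M$. $\mathrm d^2\varphi(\bar x,v)(w)$ is the second subderivative (Rockafellar–Wets Def. 13.3). A point $x^\star\in\operatorname{dom}\psi$ is a second-order stationary point of $\psi$ if $0\in\partial\psi(x^\star)$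 and $\mathrm d^2\psi(x^\star,0)(d)\ge0$ for all $d$ (for $C^2$ $\psi$: $\nabla\psi(x^\star)=0$, $\nabla^2\psi(x^\star)\succeq0$). *)

theory Defs
  imports "HOL-Analysis.Analysis"
begin

definition proper_fun :: "('a \<Rightarrow> ereal) \<Rightarrow> bool" where
  "proper_fun g \<longleftrightarrow> (\<forall>x. g x \<noteq> -\<infinity>) \<and> (\<exists>x. g x < \<infinity>)"

definition lsc_fun :: "('a::topological_space \<Rightarrow> ereal) \<Rightarrow> bool" where
  "lsc_fun g \<longleftrightarrow> (\<forall>x. g x \<le> Liminf (at x) g)"

definition prox_bounded :: "('a::real_normed_vector \<Rightarrow> ereal) \<Rightarrow> ereal \<Rightarrow> bool" where
  "prox_bounded g \<gamma>g \<longleftrightarrow>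
     (\<forall>\<gamma>::real. 0 < \<gamma> \<and> ereal \<gamma> < \<gamma>g \<longrightarrow>
        (\<exists>c::real. \<forall>x. ereal c \<le> g x + ereal (norm x ^ 2 / (2 * \<gamma>))))"

definition prox :: "real \<Rightarrow> ('a::real_normed_vector \<Rightarrow> ereal) \<Rightarrow> 'a \<Rightarrow> 'a set" where
  "prox \<gamma> g x = {z. \<forall>w. g z + ereal (norm (z - x) ^ 2 / (2 * \<gamma>))
                         \<le> g w + ereal (norm (w - x) ^ 2 / (2 * \<gamma>))}"

definition critical_point ::
  "('a::real_normed_vector \<Rightarrow> 'a) \<Rightarrow> ('a \<Rightarrow> ereal) \<Rightarrow> ereal \<Rightarrow> 'a \<Rightarrow> bool" where
  "critical_point f' g \<gamma>g x \<longleftrightarrow>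
     (\<exists>\<gamma>::real. 0 < \<gamma> \<and> ereal \<gamma> < \<gamma>g \<and> x \<in> prox \<gamma> g (x - \<gamma> *\<^sub>R f' x))"

definition fbe :: "('a::real_inner \<Rightarrow> real) \<Rightarrow> ('a \<Rightarrow> 'a) \<Rightarrow> ('a \<Rightarrow> ereal) \<Rightarrow> real \<Rightarrow> 'a \<Rightarrow> ereal" where
  "fbe f f' g \<gamma> x = (INF u. ereal (f x + f' x \<bullet> (u - x)) + g u
                              + ereal (norm (u - x) ^ 2 / (2 * \<gamma>)))"

text \<open>Regular (Frechet) subgradients and limiting subgradients (Rockafellar--Wets 8.3).\<close>
definition frechet_subdiff :: "('a::real_inner \<Rightarrow> ereal) \<Rightarrow> 'a \<Rightarrow> 'a set" where
  "frechet_subdiff g x = {v. \<bar>g x\<bar> \<noteq> \<infinity> \<and>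
     (\<forall>e>0. \<exists>d>0. \<forall>y. norm (y - x) < d \<longrightarrow>
        g x + ereal (v \<bullet> (y - x) - e * norm (y - x)) \<le> g y)}"

definition limiting_subdiff :: "('a::real_inner \<Rightarrow> ereal) \<Rightarrow> 'a \<Rightarrow> 'a set" where
  "limiting_subdiff g x = {v. \<bar>g x\<bar> \<noteq> \<infinity> \<and>
     (\<exists>X V. X \<longlonglongrightarrow> x \<and> (\<lambda>k. g (X k)) \<longlonglongrightarrow> g x \<and> V \<longlonglongrightarrow> v \<and>
            (\<forall>k. V k \<in> frechet_subdiff g (X k)))}"

text \<open>Prox-regularity of g at xb for vb (Rockafellar--Wets 13.27).\<close>
definition prox_regular_at :: "('a::real_inner \<Rightarrow> ereal) \<Rightarrow> 'a \<Rightarrow> 'a \<Rightarrow> bool" where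
  "prox_regular_at g xb vb \<longleftrightarrow> \<bar>g xb\<bar> \<noteq> \<infinity> \<and> vb \<in> limiting_subdiff g xb \<and>
     (\<exists>r\<ge>0. \<exists>\<epsilon>>0. \<forall>x' \<in> cball xb \<epsilon>. \<forall>x v.
        v \<in> limiting_subdiff g x \<and> norm (x - xb) < \<epsilon> \<and> norm (v - vb) < \<epsilon> \<and> g x \<le> g xb + ereal \<epsilon>
        \<longrightarrow> g x + ereal (v \<bullet> (x' - x) - r / 2 * norm (x' - x) ^ 2) \<le> g x')"

text \<open>Second-order difference quotient (Rockafellar--Wets 13(3)).\<close>
definition second_diff_quot :: "('a::real_inner \<Rightarrow> ereal) \<Rightarrow> 'a \<Rightarrow> 'a \<Rightarrow> real \<Rightarrow> 'a \<Rightarrow> ereal" where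
  "second_diff_quot g x v \<tau> w =
     (g (x + \<tau> *\<^sub>R w) - g x - ereal (\<tau> * (v \<bullet> w))) * ereal (2 / \<tau>\<^sup>2)"

text \<open>Second subderivative (Rockafellar--Wets Def. 13.3).\<close>
definition second_subderiv :: "('a::real_inner \<Rightarrow> ereal) \<Rightarrow> 'a \<Rightarrow> 'a \<Rightarrow> 'a \<Rightarrow> ereal" where
  "second_subderiv g x v w =
     Liminf (at_right 0 \<times>\<^sub>F nhds w) (\<lambda>(\<tau>, w'). second_diff_quot g x v \<tau> w')"

text \<open>Sequential epi-convergence of F k to h (Rockafellar--Wets Prop. 7.2).\<close>
definition epi_converges :: "(nat \<Rightarrow> 'a::topological_space \<Rightarrow> ereal) \<Rightarrow> ('a \<Rightarrow> ereal) \<Rightarrow> bool" where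
  "epi_converges F h \<longleftrightarrow> (\<forall>w.
     (\<forall>W. W \<longlonglongrightarrow> w \<longrightarrow> h w \<le> liminf (\<lambda>k. F k (W k))) \<and>
     (\<exists>W. W \<longlonglongrightarrow> w \<and> limsup (\<lambda>k. F k (W k)) \<le> h w))"

text \<open>Twice epi-differentiability (Rockafellar--Wets Def. 13.6): the quotients
  epi-converge, as tau decreases to 0, to a proper function (necessarily the
  second subderivative).\<close>
definition twice_epi_differentiable :: "('a::real_inner \<Rightarrow> ereal) \<Rightarrow> 'a \<Rightarrow> 'a \<Rightarrow> bool" where
  "twice_epi_differentiable g x v \<longleftrightarrow> \<bar>g x\<bar> \<noteq> \<infinity> \<and>
     (\<exists>h. proper_fun h \<and>
        (\<forall>\<tau>::nat \<Rightarrow> real. (\<forall>k. 0 < \<tau> k) \<and> \<tau> \<longlonglongrightarrow> 0 \<longrightarrow>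
           epi_converges (\<lambda>k. second_diff_quot g x v (\<tau> k)) h))"

definition generalized_quadratic :: "('a::real_inner \<Rightarrow> ereal) \<Rightarrow> bool" where
  "generalized_quadratic h \<longleftrightarrow>
     (\<exists>S M. subspace S \<and> linear M \<and>
        (\<forall>s. h s = (if s \<in> S then ereal (s \<bullet> M s) else \<infinity>)))"

definition twice_diff_at :: "('a::real_inner \<Rightarrow> ereal) \<Rightarrow> 'a \<Rightarrow> ('a \<Rightarrow> 'a) \<Rightarrow> bool" where
  "twice_diff_at \<psi> x H \<longleftrightarrow>
     (\<exists>e>0. \<exists>G. (\<forall>y\<in>ball x e. \<bar>\<psi> y\<bar> \<noteq> \<infinity> \<and>
                   GDERIV (\<lambda>z. real_of_ereal (\<psi> z)) y :> G y) \<and>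
               (G has_derivative H) (at x))"

definition second_order_stationary :: "('a::real_inner \<Rightarrow> ereal) \<Rightarrow> 'a \<Rightarrow> bool" where
  "second_order_stationary \<psi> x \<longleftrightarrow> \<bar>\<psi> x\<bar> \<noteq> \<infinity> \<and>
     0 \<in> limiting_subdiff \<psi> x \<and> (\<forall>d. second_subderiv \<psi> x 0 d \<ge> 0)"

end

theory Submission
  imports Defs
begin

(*
  Near the critical point x0 the proximal map P of g with step gamma is calm at
  y0 = x0 - gamma grad f(x0) and, by prox-regularity, Lipschitz around y0, so the Moreau
  envelope of g is C^1 there with gradient (y - P y) / gamma.  Since the second-order
  epi-derivative d of g is generalized quadratic, rescaled proximal points converge to the unique
  minimizer of d(w) + |w - u|^2 / gamma, which is linear in u: P is differentiable at y0.  Hence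
  the forward-backward envelope f - gamma/2 |grad f|^2 + (Moreau envelope)(x - gamma grad f(x))
  is twice differentiable at x0.  Finally phi(T x) <= phi_gamma(x) <= phi(x), with equality at x0,
  where T is the (calm) forward-backward step: the second-order difference quotients of phi_gamma
  bound those of phi from below, and from above along rescaled forward-backward steps, so the two
  second-order conditions coincide.
*)

section \<open>Filters, sequences and semicontinuity\<close>

lemma Liminf_le_liminf_comp:
  assumes "filterlim X F sequentially"
  shows "Liminf F f \<le> liminf (\<lambda>k. f (X k))"
proof (rule Liminf_least)
  fix P assume "eventually P F"
  then have "eventually (\<lambda>k. P (X k)) sequentially"
    using assms by (simp add: filterlim_iff)
  then have "eventually (\<lambda>k. (INF x\<in>Collect P. f x) \<le> f (X k)) sequentially"
    by (rule eventually_mono) (auto intro: INF_lower)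
  then show "(INF x\<in>Collect P. f x) \<le> liminf (\<lambda>k. f (X k))"
    by (rule Liminf_bounded)
qed

lemma not_eventually_sequentially_subseq:
  assumes "\<not> eventually P sequentially"
  shows "\<exists>r::nat \<Rightarrow> nat. strict_mono r \<and> (\<forall>n. \<not> P (r n))"
proof -
  have "infinite {n. \<not> P n}"
    using assms by (simp add: cofinite_eq_sequentially[symmetric] eventually_cofinite)
  from infinite_enumerate[OF this] show ?thesis
    by blast
qed

lemma LIMSEQ_by_subsequences:
  fixes X :: "nat \<Rightarrow> 'b::metric_space"
  assumes "\<And>r::nat \<Rightarrow> nat. strict_mono r \<Longrightarrow> \<exists>s::nat \<Rightarrow> nat. strict_mono s \<and> (\<lambda>n. X (r (s n))) \<longlonglongrightarrow> l"
  shows "X \<longlonglongrightarrow> l"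
proof (rule ccontr)
  assume "\<not> X \<longlonglongrightarrow> l"
  then obtain e where e: "e > 0" "\<not> eventually (\<lambda>n. dist (X n) l < e) sequentially"
    unfolding tendsto_iff by auto
  obtain r :: "nat \<Rightarrow> nat" where r: "strict_mono r" "\<And>n. \<not> dist (X (r n)) l < e"
    using not_eventually_sequentially_subseq[OF e(2)] by blast
  from assms[OF r(1)] obtain s where "(\<lambda>n. X (r (s n))) \<longlonglongrightarrow> l"
    by blast
  then have "eventually (\<lambda>n. dist (X (r (s n))) l < e) sequentially"
    using e(1) unfolding tendsto_iff by blast
  with r(2) show False
    by (simp add: eventually_False_sequentially)
qed

lemma filterlim_at_right_prod_nhds_seq:
  assumes "\<And>k. 0 < \<tau> k" "\<tau> \<longlonglongrightarrow> (0::real)" "w \<longlonglongrightarrow> u"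
  shows "filterlim (\<lambda>k. (\<tau> k, w k)) (at_right 0 \<times>\<^sub>F nhds u) sequentially"
  by (rule filterlim_Pair) (auto intro!: tendsto_imp_filterlim_at_right assms always_eventually)

lemma not_eventually_at_right_prod_nhdsE:
  fixes u :: "'a::metric_space"
  assumes "\<not> eventually P (at_right (0::real) \<times>\<^sub>F nhds u)"
  obtains \<tau> w where "\<And>k. 0 < \<tau> k" "\<tau> \<longlonglongrightarrow> 0" "w \<longlonglongrightarrow> u" "\<And>k. \<not> P (\<tau> k, w k)"
proof -
  let ?Q = "\<lambda>k p. 0 < fst p \<and> fst p < inverse (real (Suc k)) \<and> dist (snd p) u < inverse (real (Suc k))"
  have "\<exists>p. ?Q k p \<and> \<not> P p" for k
  proof (rule ccontr)
    assume none: "\<nexists>p. ?Q k p \<and> \<not> P p"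
    have "eventually (\<lambda>t::real. 0 < t \<and> t < inverse (real (Suc k))) (at_right 0)"
      using eventually_at_right_real[of 0 "inverse (real (Suc k))"] by (auto elim!: eventually_mono)
    moreover have "eventually (\<lambda>y. dist y u < inverse (real (Suc k))) (nhds u)"
      by (rule eventually_nhds_in_open[of "ball u (inverse (real (Suc k)))", THEN eventually_mono])
         (auto simp: dist_commute)
    ultimately have "eventually (?Q k) (at_right 0 \<times>\<^sub>F nhds u)"
      by (rule eventually_prodI[THEN eventually_mono]) auto
    then have "eventually P (at_right 0 \<times>\<^sub>F nhds u)"
      by (rule eventually_mono) (use none in blast)
    with assms show False
      by blast
  qed
  then obtain p where p: "\<And>k. ?Q k (p k) \<and> \<not> P (p k)"
    by metis
  show ?thesis
  proof (rule that[of "\<lambda>k. fst (p k)" "\<lambda>k. snd (p k)"])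
    have "norm (fst (p k)) \<le> inverse (real (Suc k))" for k
      using p[of k] by simp
    then show "(\<lambda>k. fst (p k)) \<longlonglongrightarrow> 0"
      by (intro Lim_null_comparison[OF _ LIMSEQ_inverse_real_of_nat] always_eventually) auto
    have "(\<lambda>k. dist (snd (p k)) u) \<longlonglongrightarrow> 0"
      by (rule Lim_null_comparison[OF _ LIMSEQ_inverse_real_of_nat])
         (use p in \<open>auto intro!: always_eventually less_imp_le\<close>)
    then show "(\<lambda>k. snd (p k)) \<longlonglongrightarrow> u"
      using tendsto_dist_iff by blast
  qed (use p in auto)
qed

lemma lsc_fun_le_liminf:
  assumes "lsc_fun g" "X \<longlonglongrightarrow> z"
  shows "g z \<le> liminf (\<lambda>k. g (X k))"
proof (unfold le_Liminf_iff, intro allI impI)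
  fix y assume y: "y < g z"
  have "g z \<le> Liminf (at z) g"
    using assms(1) unfolding lsc_fun_def by blast
  then have "eventually (\<lambda>x. y < g x) (at z)"
    using y le_Liminf_iff by blast
  then have "eventually (\<lambda>x. y < g x) (nhds z)"
    unfolding eventually_at_filter by (rule eventually_mono) (use y in auto)
  then show "eventually (\<lambda>k. y < g (X k)) sequentially"
    using assms(2) unfolding filterlim_iff by blast
qed

lemma lsc_attains_min:
  fixes h :: "'a::heine_borel \<Rightarrow> ereal"
  assumes lsc: "\<And>X z. X \<longlonglongrightarrow> z \<Longrightarrow> h z \<le> liminf (\<lambda>k. h (X k))"
    and inf: "(INF z. h z) = ereal m" and bdd: "bounded {z. h z < ereal (m + 1)}"
  obtains x where "\<And>z. h x \<le> h z"
proof -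
  have "\<exists>z. h z < ereal (m + inverse (real (Suc k)))" for k
  proof -
    have "(INF z. h z) < ereal (m + inverse (real (Suc k)))"
      using inf by simp
    then show ?thesis
      by (simp add: INF_less_iff)
  qed
  then obtain zs where zs: "\<And>k. h (zs k) < ereal (m + inverse (real (Suc k)))"
    by metis
  have "h (zs k) < ereal (m + 1)" for k
  proof -
    have "inverse (real (Suc k)) \<le> 1"
      by (simp add: field_simps)
    then have "ereal (m + inverse (real (Suc k))) \<le> ereal (m + 1)"
      by simp
    with zs[of k] show ?thesis
      by (rule order_less_le_trans)
  qed
  then have "range zs \<subseteq> {z. h z < ereal (m + 1)}"
    by auto
  then obtain l and r :: "nat \<Rightarrow> nat" where r: "strict_mono r" "(\<lambda>k. zs (r k)) \<longlonglongrightarrow> l"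
    using bounded_imp_convergent_subsequence[OF bounded_subset[OF bdd]] unfolding o_def by blast
  have "h l \<le> ereal m + ereal e" if e: "e > 0" for e
  proof -
    have "(\<lambda>k. inverse (real (Suc (r k)))) \<longlonglongrightarrow> 0"
      using LIMSEQ_subseq_LIMSEQ[OF LIMSEQ_inverse_real_of_nat r(1)] by (simp add: o_def)
    then have "eventually (\<lambda>k. inverse (real (Suc (r k))) < e) sequentially"
      using e by (rule order_tendstoD)
    then have "eventually (\<lambda>k. h (zs (r k)) \<le> ereal (m + e)) sequentially"
    proof (rule eventually_mono)
      fix k assume "inverse (real (Suc (r k))) < e"
      then have "ereal (m + inverse (real (Suc (r k)))) \<le> ereal (m + e)"
        by simp
      with zs[of "r k"] show "h (zs (r k)) \<le> ereal (m + e)"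
        by (meson less_imp_le order_less_le_trans)
    qed
    then have "liminf (\<lambda>k. h (zs (r k))) \<le> ereal (m + e)"
      by (intro Liminf_le) simp_all
    with lsc[OF r(2)] show ?thesis
      by simp
  qed
  then have "h l \<le> (INF z. h z)"
    unfolding inf by (rule ereal_le_epsilon2)
  then show ?thesis
    using that order_trans INF_lower[of _ UNIV h] by blast
qed

lemma power2_norm_add: "(norm (a + b))^2 = (norm a)^2 + 2 * (a \<bullet> b) + (norm (b::'a::real_inner))^2"
  by (simp add: power2_norm_eq_inner inner_add_left inner_add_right inner_commute)

lemma power2_norm_diff: "(norm (a - b))^2 = (norm a)^2 - 2 * (a \<bullet> b) + (norm (b::'a::real_inner))^2"
  by (simp add: power2_norm_eq_inner inner_diff_left inner_diff_right inner_commute)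

lemma quadratic_lower_bound:
  fixes b c t :: real
  assumes "0 < c"
  shows "- (b^2 / (4*c)) \<le> c*t^2 - b*t"
proof -
  have "0 \<le> (2*c*t - b)^2"
    by simp
  also have "\<dots> = 4*c*(c*t^2 - b*t) + b^2"
    by (simp add: power2_eq_square algebra_simps)
  finally show ?thesis
    using assms by (simp add: field_simps)
qed

lemma quadratic_sublevel_bound:
  fixes \<mu> b n :: real
  assumes "0 < \<mu>" "0 \<le> n" "\<mu> * n^2 - b * n < 1"
  shows "n \<le> max 1 ((b + 1) / \<mu>)"
proof (cases "n \<le> 1")
  case False
  then have "\<mu> * n * n < (1 + b) * n"
    using assms(3) by (simp add: power2_eq_square algebra_simps)
  then have "\<mu> * n < b + 1"
    using False by (simp add: mult_less_cancel_right)
  then have "n \<le> (b + 1) / \<mu>"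
    using assms(1) by (simp add: field_simps)
  then show ?thesis
    by simp
qed simp

lemma linear_coeff_eq_0_if_nonneg:
  fixes a b :: real
  assumes "\<And>s. 0 \<le> s * a + s^2 * b"
  shows "a = 0"
proof (rule ccontr)
  assume a: "a \<noteq> 0"
  define c where "c = \<bar>b\<bar> + 1"
  have c: "0 < c"
    unfolding c_def by simp
  define s where "s = - a / c"
  have "s * a + s^2 * b \<le> s * a + s^2 * (c - 1)"
    unfolding c_def by (intro add_left_mono mult_left_mono) auto
  also have "\<dots> = - (a^2) / c^2"
    unfolding s_def using c by (simp add: power2_eq_square field_simps)
  also have "\<dots> < 0"
    using a c by simp
  finally show False
    using assms[of s] by simp
qed

lemma ereal_add_mult_le_cancel:
  assumes "0 < a" "ereal c + ereal a * X \<le> ereal c + ereal a * Y"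
  shows "X \<le> Y"
  using assms by (cases X; cases Y) (auto simp: ereal_mult_le_mult_iff)

section \<open>Derivatives\<close>

lemma gderiv_along_line:
  assumes "GDERIV F (x + s *\<^sub>R v) :> G"
  shows "((\<lambda>t. F (x + t *\<^sub>R v)) has_real_derivative v \<bullet> G) (at s)"
proof -
  have "((\<lambda>t::real. x + t *\<^sub>R v) has_derivative (\<lambda>t. t *\<^sub>R v)) (at s)"
    by (intro derivative_eq_intros) auto
  from has_derivative_compose[OF this assms[unfolded gderiv_def]]
  show ?thesis
    unfolding has_field_derivative_def by (simp add: mult.commute[of _ "v \<bullet> G"])
qed

lemma lipschitz_gradient_upper_bound:
  fixes f :: "'a::real_inner \<Rightarrow> real"
  assumes grad: "\<And>x. GDERIV f x :> f' x" and lip: "L-lipschitz_on UNIV f'"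
  shows "f z \<le> f x + f' x \<bullet> (z - x) + L * (norm (z - x))^2"
proof -
  define d where "d = z - x"
  have "0 \<le> L"
    using lip by (rule lipschitz_on_nonneg)
  obtain \<xi> where \<xi>: "0 < \<xi>" "\<xi> < 1" "f (x + d) - f x = d \<bullet> f' (x + \<xi> *\<^sub>R d)"
    using MVT2[of 0 1 "\<lambda>t. f (x + t *\<^sub>R d)" "\<lambda>t. d \<bullet> f' (x + t *\<^sub>R d)"]
      gderiv_along_line[OF grad] by auto
  have "d \<bullet> f' (x + \<xi> *\<^sub>R d) - d \<bullet> f' x = d \<bullet> (f' (x + \<xi> *\<^sub>R d) - f' x)"
    by (simp add: inner_diff_right)
  also have "\<dots> \<le> norm d * norm (f' (x + \<xi> *\<^sub>R d) - f' x)"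
    by (rule norm_cauchy_schwarz)
  also have "\<dots> \<le> norm d * (L * norm (\<xi> *\<^sub>R d))"
    using lipschitz_onD[OF lip, of "x + \<xi> *\<^sub>R d" x] by (intro mult_left_mono) (auto simp: dist_norm)
  also have "\<dots> \<le> norm d * (L * norm d)"
    using \<xi> \<open>0 \<le> L\<close> by (intro mult_left_mono) (auto simp: mult_left_le_one_le)
  finally show ?thesis
    using \<xi>(3) unfolding d_def by (simp add: power2_eq_square inner_commute algebra_simps)
qed

lemma has_derivative_vanishing_bound:
  assumes U: "(U has_derivative U') (at x0)" and U0: "U x0 = 0"
  obtains C d where "0 < C" "0 < d" "\<And>y. norm (y - x0) < d \<Longrightarrow> norm (U y) \<le> C * norm (y - x0)"
proof -
  obtain K where K: "K > 0" "\<And>h. norm (U' h) \<le> norm h * K"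
    using bounded_linear.pos_bounded[OF has_derivative_bounded_linear[OF U]] by blast
  obtain d where d: "d > 0" "\<And>y. norm (y - x0) < d \<Longrightarrow> norm (U y - U x0 - U' (y - x0)) \<le> 1 * norm (y - x0)"
    using U zero_less_one unfolding has_derivative_at_alt by blast
  have "norm (U y) \<le> (1 + K) * norm (y - x0)" if "norm (y - x0) < d" for y
    using norm_triangle_ineq[of "U y - U' (y - x0)" "U' (y - x0)"] d(2)[OF that] K(2)[of "y - x0"] U0
    by (simp add: algebra_simps)
  with K d show ?thesis
    using that[of "1 + K" d] by simp
qed

lemma has_derivative_inner_vanishing:
  fixes a :: "'a::real_normed_vector \<Rightarrow> 'b::real_inner"
  assumes U: "(U has_derivative U') (at x0)" and U0: "U x0 = 0" and a: "isCont a x0"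
  shows "((\<lambda>x. a x \<bullet> U x) has_derivative (\<lambda>h. a x0 \<bullet> U' h)) (at x0)"
proof -
  obtain C d where C: "0 < C" "0 < d" "\<And>y. norm (y - x0) < d \<Longrightarrow> norm (U y) \<le> C * norm (y - x0)"
    using has_derivative_vanishing_bound[OF U U0] by blast
  have "((\<lambda>x. (a x - a x0) \<bullet> U x) has_derivative (\<lambda>h. 0)) (at x0)"
    unfolding has_derivative_at_alt
  proof (intro conjI allI impI bounded_linear_zero)
    fix e :: real assume e: "0 < e"
    obtain d' where d': "d' > 0" "\<And>y. y \<noteq> x0 \<Longrightarrow> norm (y - x0) < d' \<Longrightarrow> norm (a y - a x0) < e / C"
      using a e C(1) unfolding isCont_def LIM_eq by (meson divide_pos_pos)
    show "\<exists>d>0. \<forall>y. norm (y - x0) < d \<longrightarrow>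
        norm ((a y - a x0) \<bullet> U y - (a x0 - a x0) \<bullet> U x0 - 0) \<le> e * norm (y - x0)"
    proof (intro exI[of _ "min d d'"] conjI allI impI)
      fix y assume y: "norm (y - x0) < min d d'"
      have "norm ((a y - a x0) \<bullet> U y) \<le> norm (a y - a x0) * norm (U y)"
        by (simp add: Cauchy_Schwarz_ineq2)
      also have "\<dots> \<le> e / C * (C * norm (y - x0))"
      proof (rule mult_mono)
        show "norm (a y - a x0) \<le> e / C"
          using y d'(2)[of y] e C(1) by (cases "y = x0") auto
      qed (use y C(3)[of y] e C(1) in auto)
      finally show "norm ((a y - a x0) \<bullet> U y - (a x0 - a x0) \<bullet> U x0 - 0) \<le> e * norm (y - x0)"
        using C(1) by simp
    qed (use C d' in simp)
  qed
  moreover have "((\<lambda>x. a x0 \<bullet> U x) has_derivative (\<lambda>h. a x0 \<bullet> U' h)) (at x0)"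
    by (intro derivative_intros U)
  ultimately have "((\<lambda>x. a x0 \<bullet> U x + (a x - a x0) \<bullet> U x) has_derivative (\<lambda>h. a x0 \<bullet> U' h + 0)) (at x0)"
    by (intro has_derivative_add)
  then show ?thesis
    by (simp add: inner_diff_left)
qed

lemma second_order_mean_value:
  fixes F :: "'a::real_inner \<Rightarrow> real"
  assumes grad: "\<And>x. x \<in> ball x0 r \<Longrightarrow> GDERIV F x :> G x" and v: "norm v < r"
    and G0: "G x0 = 0" and H: "linear H"
  obtains \<xi> where "0 < \<xi>" "\<xi> < 1"
    "F (x0 + v) - F x0 - (H v \<bullet> v) / 2 = v \<bullet> (G (x0 + \<xi> *\<^sub>R v) - G x0 - H (\<xi> *\<^sub>R v))"
proof -
  define c where "c = H v \<bullet> v"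
  have "((\<lambda>t. F (x0 + t *\<^sub>R v) - t^2 / 2 * c) has_real_derivative v \<bullet> G (x0 + s *\<^sub>R v) - s * c) (at s)"
    if "0 \<le> s" "s \<le> 1" for s
  proof (rule DERIV_diff)
    have "norm (s *\<^sub>R v) \<le> norm v"
      using that by (simp add: mult_left_le_one_le)
    then have "x0 + s *\<^sub>R v \<in> ball x0 r"
      using v by (simp add: dist_norm)
    then show "((\<lambda>t. F (x0 + t *\<^sub>R v)) has_real_derivative v \<bullet> G (x0 + s *\<^sub>R v)) (at s)"
      by (intro gderiv_along_line grad)
    show "((\<lambda>t. t^2 / 2 * c) has_real_derivative s * c) (at s)"
      by (auto intro!: derivative_eq_intros)
  qed
  then obtain \<xi> where \<xi>: "0 < \<xi>" "\<xi> < 1" "F (x0 + v) - F x0 - c / 2 = v \<bullet> G (x0 + \<xi> *\<^sub>R v) - \<xi> * c"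
    using MVT2[of 0 1 "\<lambda>t. F (x0 + t *\<^sub>R v) - t^2 / 2 * c" "\<lambda>s. v \<bullet> G (x0 + s *\<^sub>R v) - s * c"]
    by auto
  moreover have "\<xi> * c = v \<bullet> H (\<xi> *\<^sub>R v)"
    using H unfolding c_def by (simp add: linear_scale inner_commute)
  ultimately show ?thesis
    using that G0 unfolding c_def by (simp add: inner_diff_right)
qed

lemma gradient_taylor_remainder:
  fixes F :: "'a::real_inner \<Rightarrow> real"
  assumes grad: "\<And>x. x \<in> ball x0 r \<Longrightarrow> GDERIV F x :> G x" and r: "0 < r"
    and G0: "G x0 = 0" and H: "(G has_derivative H) (at x0)" and \<eta>: "0 < \<eta>"
  obtains \<delta> where "0 < \<delta>"
    "\<And>v. norm v < \<delta> \<Longrightarrow> \<bar>F (x0 + v) - F x0 - (H v \<bullet> v) / 2\<bar> \<le> \<eta> * (norm v)^2"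
proof -
  obtain d where d: "d > 0"
    "\<And>y. norm (y - x0) < d \<Longrightarrow> norm (G y - G x0 - H (y - x0)) \<le> \<eta> * norm (y - x0)"
    using H \<eta> unfolding has_derivative_at_alt by blast
  have "\<bar>F (x0 + v) - F x0 - (H v \<bullet> v) / 2\<bar> \<le> \<eta> * (norm v)^2" if v: "norm v < min d r" for v
  proof -
    obtain \<xi> where \<xi>: "0 < \<xi>" "\<xi> < 1"
      "F (x0 + v) - F x0 - (H v \<bullet> v) / 2 = v \<bullet> (G (x0 + \<xi> *\<^sub>R v) - G x0 - H (\<xi> *\<^sub>R v))"
      by (rule second_order_mean_value[OF grad _ G0 has_derivative_linear[OF H]]) (use v in auto)
    have "\<xi> * norm v \<le> norm v"
      using \<xi> by (simp add: mult_left_le_one_le)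
    then have "norm (G (x0 + \<xi> *\<^sub>R v) - G x0 - H (\<xi> *\<^sub>R v)) \<le> \<eta> * norm v"
      using d(2)[of "x0 + \<xi> *\<^sub>R v"] v \<xi> \<eta> by (simp add: order_trans)
    then have "\<bar>v \<bullet> (G (x0 + \<xi> *\<^sub>R v) - G x0 - H (\<xi> *\<^sub>R v))\<bar> \<le> norm v * (\<eta> * norm v)"
      using Cauchy_Schwarz_ineq2[of v] by (meson mult_left_mono norm_ge_zero order_trans)
    then show ?thesis
      unfolding \<xi>(3) by (simp add: power2_eq_square mult.left_commute)
  qed
  then show ?thesis
    using that[of "min d r"] d(1) r by simp
qed

lemma second_diff_quot_error:
  fixes F :: "'a::real_inner \<Rightarrow> real"
  assumes taylor: "\<bar>F (x0 + t *\<^sub>R w) - F x0 - (H (t *\<^sub>R w) \<bullet> (t *\<^sub>R w)) / 2\<bar> \<le> \<eta> * (norm (t *\<^sub>R w))^2"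
    and H: "linear H" and t: "0 < t"
  shows "\<bar>(F (x0 + t *\<^sub>R w) - F x0) * (2 / t^2) - H w \<bullet> w\<bar> \<le> 2 * \<eta> * (norm w)^2"
proof -
  define E where "E = F (x0 + t *\<^sub>R w) - F x0 - (H (t *\<^sub>R w) \<bullet> (t *\<^sub>R w)) / 2"
  have "H (t *\<^sub>R w) \<bullet> (t *\<^sub>R w) = t^2 * (H w \<bullet> w)"
    using H by (simp add: linear_scale power2_eq_square)
  then have "(F (x0 + t *\<^sub>R w) - F x0) * (2 / t^2) - H w \<bullet> w = E * (2 / t^2)"
    unfolding E_def using t by (simp add: field_simps)
  also have "\<bar>\<dots>\<bar> = \<bar>E\<bar> * (2 / t^2)"
    by (simp add: abs_mult)
  also have "\<dots> \<le> \<eta> * (norm (t *\<^sub>R w))^2 * (2 / t^2)"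
    using taylor unfolding E_def by (rule mult_right_mono) simp
  also have "\<dots> = 2 * \<eta> * (norm w)^2"
    using t by (simp add: power_mult_distrib field_simps)
  finally show ?thesis .
qed

lemma second_diff_quot_tendsto_hessian:
  fixes F :: "'a::real_inner \<Rightarrow> real"
  assumes grad: "\<And>x. x \<in> ball x0 r \<Longrightarrow> GDERIV F x :> G x" and r: "0 < r"
    and G0: "G x0 = 0" and H: "(G has_derivative H) (at x0)"
  shows "((\<lambda>p. (F (x0 + fst p *\<^sub>R snd p) - F x0) * (2 / (fst p)^2)) \<longlongrightarrow> H u \<bullet> u)
           (at_right 0 \<times>\<^sub>F nhds u)"
proof -
  have "((\<lambda>p. (F (x0 + fst p *\<^sub>R snd p) - F x0) * (2 / (fst p)^2) - H (snd p) \<bullet> snd p) \<longlongrightarrow> 0)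
          (at_right 0 \<times>\<^sub>F nhds u)"
    unfolding tendsto_iff
  proof (intro allI impI)
    fix e :: real assume e: "0 < e"
    define B where "B = norm u + 1"
    have B: "0 < B"
      unfolding B_def by (simp add: add_nonneg_pos)
    obtain \<delta> where \<delta>: "0 < \<delta>"
      "\<And>v. norm v < \<delta> \<Longrightarrow> \<bar>F (x0 + v) - F x0 - (H v \<bullet> v) / 2\<bar> \<le> e / (4 * B^2) * (norm v)^2"
      using gradient_taylor_remainder[OF grad r G0 H, of "e / (4 * B^2)"] e B by auto
    have small: "dist ((F (x0 + t *\<^sub>R w) - F x0) * (2 / t^2) - H w \<bullet> w) 0 < e"
      if t: "0 < t" "t < \<delta> / B" and w: "dist w u < 1" for t w
    proof -
      have wB: "norm w < B"
        using w norm_triangle_ineq[of u "w - u"] unfolding B_def by (simp add: dist_norm)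
      have "t * norm w \<le> t * B"
        using wB t by (intro mult_left_mono) auto
      also have "\<dots> < \<delta>"
        using t B by (simp add: pos_less_divide_eq)
      finally have "\<bar>(F (x0 + t *\<^sub>R w) - F x0) * (2 / t^2) - H w \<bullet> w\<bar> \<le> 2 * (e / (4 * B^2)) * (norm w)^2"
        using \<delta>(2)[of "t *\<^sub>R w"] t
        by (intro second_diff_quot_error has_derivative_linear[OF H]) simp_all
      also have "\<dots> \<le> 2 * (e / (4 * B^2)) * B^2"
        using wB e by (intro mult_left_mono power_mono) auto
      also have "\<dots> < e"
        using B e by simp
      finally show ?thesis
        by simp
    qed
    have "eventually (\<lambda>t. 0 < t \<and> t < \<delta> / B) (at_right (0::real))"
      using eventually_at_right_real[of 0 "\<delta> / B"] \<delta>(1) B by (auto elim!: eventually_mono)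
    moreover have "eventually (\<lambda>w. dist w u < 1) (nhds u)"
      by (rule eventually_nhds_in_open[of "ball u 1", THEN eventually_mono]) (auto simp: dist_commute)
    ultimately show "eventually (\<lambda>p. dist ((F (x0 + fst p *\<^sub>R snd p) - F x0) * (2 / (fst p)^2)
                         - H (snd p) \<bullet> snd p) 0 < e) (at_right 0 \<times>\<^sub>F nhds u)"
      by (rule eventually_prodI[THEN eventually_mono]) (use small in auto)
  qed
  moreover have "((\<lambda>p. H (snd p) \<bullet> snd p) \<longlongrightarrow> H u \<bullet> u) (at_right (0::real) \<times>\<^sub>F nhds u)"
  proof -
    have "(snd \<longlongrightarrow> u) (at_right (0::real) \<times>\<^sub>F nhds u)"
      by (rule filterlim_snd)
    from tendsto_inner[OF bounded_linear.tendsto[OF has_derivative_bounded_linear[OF H] this] this]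
    show ?thesis .
  qed
  ultimately show ?thesis
    by (rule Lim_transform[rotated])
qed

lemma adjoint_eq_sum_Basis:
  fixes B :: "'a::euclidean_space \<Rightarrow> 'b::euclidean_space"
  assumes "linear B"
  shows "adjoint B u = (\<Sum>i\<in>Basis. (B i \<bullet> u) *\<^sub>R i)"
proof -
  have "adjoint B u \<bullet> i = B i \<bullet> u" for i
    using adjoint_works[OF assms, of i u] by (simp add: inner_commute)
  then show ?thesis
    by (subst euclidean_representation[symmetric]) simp
qed

lemma second_subderiv_eq_hessian:
  fixes F :: "'a::real_inner \<Rightarrow> real"
  assumes "\<And>x. x \<in> ball x0 r \<Longrightarrow> GDERIV F x :> G x" "0 < r" "G x0 = 0" "(G has_derivative H) (at x0)"
  shows "second_subderiv (\<lambda>x. ereal (F x)) x0 0 u = ereal (H u \<bullet> u)"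
proof -
  have quot: "(\<lambda>(t, w). second_diff_quot (\<lambda>x. ereal (F x)) x0 0 t w)
      = (\<lambda>p. ereal ((F (x0 + fst p *\<^sub>R snd p) - F x0) * (2 / (fst p)^2)))"
    by (auto simp: second_diff_quot_def)
  have "at_right (0::real) \<times>\<^sub>F nhds u \<noteq> bot"
    by (simp add: prod_filter_eq_bot)
  from lim_imp_Liminf[OF this tendsto_ereal[OF second_diff_quot_tendsto_hessian[OF assms]]]
  show ?thesis
    unfolding second_subderiv_def quot .
qed

section \<open>Subgradients, proximal points and second subderivatives\<close>

lemma frechet_subdiff_imp_limiting_subdiff:
  assumes "v \<in> frechet_subdiff g x"
  shows "v \<in> limiting_subdiff g x"
  using assms unfolding limiting_subdiff_def
  by (intro CollectI conjI exI[of _ "\<lambda>k. x"] exI[of _ "\<lambda>k. v"]) (auto simp: frechet_subdiff_def)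

lemma prox_frechet_subgradient:
  assumes x: "x \<in> prox \<gamma> g y" and \<gamma>: "0 < \<gamma>" and fin: "\<bar>g x\<bar> \<noteq> \<infinity>"
  shows "(y - x) /\<^sub>R \<gamma> \<in> frechet_subdiff g x"
  unfolding frechet_subdiff_def
proof (intro CollectI conjI fin allI impI)
  fix e :: real assume e: "0 < e"
  obtain a where a: "g x = ereal a"
    using fin by (cases "g x") auto
  show "\<exists>d>0. \<forall>z. norm (z - x) < d \<longrightarrow> g x + ereal (((y - x) /\<^sub>R \<gamma>) \<bullet> (z - x) - e * norm (z - x)) \<le> g z"
  proof (intro exI conjI allI impI)
    show "0 < 2 * \<gamma> * e"
      using e \<gamma> by simp
    fix z assume z: "norm (z - x) < 2 * \<gamma> * e"
    have opt: "g x + ereal ((norm (x - y))^2 / (2*\<gamma>)) \<le> g z + ereal ((norm (z - y))^2 / (2*\<gamma>))"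
      using x unfolding prox_def by blast
    show "g x + ereal (((y - x) /\<^sub>R \<gamma>) \<bullet> (z - x) - e * norm (z - x)) \<le> g z"
    proof (cases "g z")
      case (real b)
      define q where "q = (z - x) \<bullet> (x - y)"
      have "a + (norm (x - y))^2 / (2*\<gamma>) \<le> b + (norm (z - y))^2 / (2*\<gamma>)"
        using opt unfolding a real by simp
      moreover have "(norm (z - y))^2 = (norm (z - x))^2 + 2 * q + (norm (x - y))^2"
        unfolding q_def using power2_norm_add[of "z - x" "x - y"] by simp
      ultimately have "a - (norm (z - x))^2 / (2*\<gamma>) - q / \<gamma> \<le> b"
        using \<gamma> by (simp add: field_simps)
      moreover have "(norm (z - x))^2 / (2*\<gamma>) \<le> e * norm (z - x)"
      proof -
        have "norm (z - x) * norm (z - x) \<le> (2 * \<gamma> * e) * norm (z - x)"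
          using z by (intro mult_right_mono) auto
        then show ?thesis
          using \<gamma> by (simp add: power2_eq_square field_simps)
      qed
      moreover have "((y - x) /\<^sub>R \<gamma>) \<bullet> (z - x) = - q / \<gamma>"
        unfolding q_def using \<gamma> by (simp add: inner_commute inner_diff_left inner_diff_right field_simps)
      ultimately show ?thesis
        unfolding a real by simp
    qed (use opt a in auto)
  qed
qed

lemma prox_fixed_point_minorant:
  assumes "x0 \<in> prox \<gamma> g (x0 + \<gamma> *\<^sub>R v)" and \<gamma>: "0 < \<gamma>"
  shows "g x0 + ereal (v \<bullet> (z - x0) - (norm (z - x0))^2 / (2*\<gamma>)) \<le> g z"
proof -
  have "g x0 + ereal ((norm (x0 - (x0 + \<gamma> *\<^sub>R v)))^2 / (2*\<gamma>))
      \<le> g z + ereal ((norm (z - (x0 + \<gamma> *\<^sub>R v)))^2 / (2*\<gamma>))"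
    using assms(1) unfolding prox_def by blast
  moreover have "(norm (x0 - (x0 + \<gamma> *\<^sub>R v)))^2 = \<gamma>^2 * (norm v)^2"
    using \<gamma> by (simp add: power_mult_distrib)
  moreover have "(norm (z - (x0 + \<gamma> *\<^sub>R v)))^2 = (norm (z - x0))^2 - 2 * \<gamma> * (v \<bullet> (z - x0)) + \<gamma>^2 * (norm v)^2"
    using power2_norm_diff[of "z - x0" "\<gamma> *\<^sub>R v"] by (simp add: diff_diff_eq power_mult_distrib inner_commute)
  ultimately have opt: "g x0 + ereal (\<gamma>^2 * (norm v)^2 / (2*\<gamma>))
      \<le> g z + ereal (((norm (z - x0))^2 - 2 * \<gamma> * (v \<bullet> (z - x0)) + \<gamma>^2 * (norm v)^2) / (2*\<gamma>))"
    by simp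
  show ?thesis
  proof (cases "g x0"; cases "g z")
    fix a b assume "g x0 = ereal a" "g z = ereal b"
    then show ?thesis
      using opt \<gamma> by (simp add: field_simps power2_eq_square)
  qed (use opt in auto)
qed

lemma zero_frechet_subdiff_add_minorant:
  fixes f :: "'a::real_inner \<Rightarrow> real"
  assumes f: "GDERIV f x0 :> G" and fin: "\<bar>g x0\<bar> \<noteq> \<infinity>" and \<gamma>: "0 < \<gamma>"
    and minor: "\<And>z. g x0 + ereal ((- G) \<bullet> (z - x0) - (norm (z - x0))^2 / (2*\<gamma>)) \<le> g z"
  shows "0 \<in> frechet_subdiff (\<lambda>x. ereal (f x) + g x) x0"
  unfolding frechet_subdiff_def
proof (intro CollectI conjI allI impI)
  obtain a where a: "g x0 = ereal a"
    using fin by (cases "g x0") auto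
  show "\<bar>ereal (f x0) + g x0\<bar> \<noteq> \<infinity>"
    unfolding a by simp
  fix e :: real assume e: "0 < e"
  obtain d where d: "d > 0" "\<And>y. norm (y - x0) < d \<Longrightarrow> norm (f y - f x0 - (y - x0) \<bullet> G) \<le> e / 2 * norm (y - x0)"
    using f e unfolding gderiv_def has_derivative_at_alt by (meson half_gt_zero)
  show "\<exists>d>0. \<forall>y. norm (y - x0) < d \<longrightarrow>
      ereal (f x0) + g x0 + ereal (0 \<bullet> (y - x0) - e * norm (y - x0)) \<le> ereal (f y) + g y"
  proof (intro exI[of _ "min d (\<gamma> * e)"] conjI allI impI)
    show "0 < min d (\<gamma> * e)"
      using d e \<gamma> by simp
    fix y assume y: "norm (y - x0) < min d (\<gamma> * e)"
    define n where "n = norm (y - x0)"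
    have "\<bar>f y - f x0 - (y - x0) \<bullet> G\<bar> \<le> e / 2 * n"
      using d(2)[of y] y unfolding n_def by simp
    then have "f x0 + (y - x0) \<bullet> G - e / 2 * n \<le> f y"
      by (unfold abs_le_iff) linarith
    moreover have "n^2 / (2*\<gamma>) \<le> e / 2 * n"
    proof -
      have "n * n \<le> n * (\<gamma> * e)"
        using y unfolding n_def by (intro mult_left_mono) auto
      then show ?thesis
        using \<gamma> by (simp add: power2_eq_square field_simps)
    qed
    moreover have "ereal (a + ((- G) \<bullet> (y - x0) - n^2 / (2*\<gamma>))) \<le> g y"
      using minor[of y] unfolding a n_def by simp
    ultimately show "ereal (f x0) + g x0 + ereal (0 \<bullet> (y - x0) - e * norm (y - x0)) \<le> ereal (f y) + g y"
      unfolding a n_def[symmetric] by (cases "g y") (auto simp: inner_commute)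
  qed
qed

lemma zero_frechet_subdiff_of_gradient:
  assumes "GDERIV F x0 :> 0"
  shows "0 \<in> frechet_subdiff (\<lambda>x. ereal (F x)) x0"
  unfolding frechet_subdiff_def
proof (intro CollectI conjI allI impI)
  fix e :: real assume "0 < e"
  then obtain d where d: "d > 0" "\<And>y. norm (y - x0) < d \<Longrightarrow> norm (F y - F x0) \<le> e * norm (y - x0)"
    using assms unfolding gderiv_def has_derivative_at_alt by auto
  have "F x0 - e * norm (y - x0) \<le> F y" if "norm (y - x0) < d" for y
    using d(2)[OF that] by (unfold real_norm_def abs_le_iff) linarith
  with d(1) show "\<exists>d>0. \<forall>y. norm (y - x0) < d \<longrightarrow>
      ereal (F x0) + ereal (0 \<bullet> (y - x0) - e * norm (y - x0)) \<le> ereal (F y)"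
    by auto
qed simp

lemma second_subderiv_le_liminf:
  assumes "\<And>k. 0 < \<tau> k" "\<tau> \<longlonglongrightarrow> 0" "w \<longlonglongrightarrow> u"
  shows "second_subderiv \<phi> x v u \<le> liminf (\<lambda>k. second_diff_quot \<phi> x v (\<tau> k) (w k))"
  using Liminf_le_liminf_comp[OF filterlim_at_right_prod_nhds_seq[OF assms],
      of "\<lambda>(t, w'). second_diff_quot \<phi> x v t w'"]
  unfolding second_subderiv_def by simp

lemma second_subderiv_geI:
  assumes "\<And>\<tau> w. (\<And>k. 0 < \<tau> k) \<Longrightarrow> \<tau> \<longlonglongrightarrow> 0 \<Longrightarrow> w \<longlonglongrightarrow> u \<Longrightarrow>
             c \<le> liminf (\<lambda>k. second_diff_quot \<phi> x v (\<tau> k) (w k))"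
  shows "c \<le> second_subderiv \<phi> x v u"
  unfolding second_subderiv_def le_Liminf_iff
proof (intro allI impI)
  fix y assume y: "y < c"
  show "eventually (\<lambda>p. y < (case p of (t, w') \<Rightarrow> second_diff_quot \<phi> x v t w')) (at_right 0 \<times>\<^sub>F nhds u)"
  proof (rule ccontr)
    assume "\<not> ?thesis"
    then obtain \<tau> w where tw: "\<And>k. 0 < \<tau> k" "\<tau> \<longlonglongrightarrow> 0" "w \<longlonglongrightarrow> u"
      "\<And>k. \<not> y < second_diff_quot \<phi> x v (\<tau> k) (w k)"
      by (rule not_eventually_at_right_prod_nhdsE) auto
    have "c \<le> liminf (\<lambda>k. second_diff_quot \<phi> x v (\<tau> k) (w k))"
      using assms tw(1-3) by blast
    also have "\<dots> \<le> y"
      by (intro Liminf_le) (use tw(4) in \<open>auto simp: not_less\<close>)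
    finally show False
      using y by simp
  qed
qed

lemma second_diff_quot_ge_minorant:
  assumes minor: "\<And>z. g x0 + ereal (v \<bullet> (z - x0) - (norm (z - x0))^2 / (2*\<gamma>)) \<le> g z"
    and fin: "\<bar>g x0\<bar> \<noteq> \<infinity>" and \<gamma>: "0 < \<gamma>" and t: "0 < t"
  shows "ereal (- ((norm w)^2) / \<gamma>) \<le> second_diff_quot g x0 v t w"
proof -
  obtain a where a: "g x0 = ereal a"
    using fin by (cases "g x0") auto
  have "ereal (a + (t * (v \<bullet> w) - t^2 * (norm w)^2 / (2*\<gamma>))) \<le> g (x0 + t *\<^sub>R w)"
    using minor[of "x0 + t *\<^sub>R w"] unfolding a by (simp add: power_mult_distrib)
  then show ?thesis
    using t \<gamma> unfolding second_diff_quot_def a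
    by (cases "g (x0 + t *\<^sub>R w)") (simp_all add: field_simps power2_eq_square)
qed

lemma second_subderiv_ge_minorant:
  assumes minor: "\<And>z. g x0 + ereal (v \<bullet> (z - x0) - (norm (z - x0))^2 / (2*\<gamma>)) \<le> g z"
    and fin: "\<bar>g x0\<bar> \<noteq> \<infinity>" and \<gamma>: "0 < \<gamma>"
  shows "ereal (- ((norm w)^2) / \<gamma>) \<le> second_subderiv g x0 v w"
proof (rule second_subderiv_geI)
  fix \<tau> :: "nat \<Rightarrow> real" and w' :: "nat \<Rightarrow> 'a" assume \<tau>: "\<And>k. 0 < \<tau> k" and "w' \<longlonglongrightarrow> w"
  then have "(\<lambda>k. ereal (- ((norm (w' k))^2) / \<gamma>)) \<longlonglongrightarrow> ereal (- ((norm w)^2) / \<gamma>)"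
    using \<gamma> by (intro tendsto_intros) auto
  then have "ereal (- ((norm w)^2) / \<gamma>) = liminf (\<lambda>k. ereal (- ((norm (w' k))^2) / \<gamma>))"
    by (rule lim_imp_Liminf[OF sequentially_bot, symmetric])
  also have "\<dots> \<le> liminf (\<lambda>k. second_diff_quot g x0 v (\<tau> k) (w' k))"
    using second_diff_quot_ge_minorant[OF minor fin \<gamma> \<tau>] by (intro Liminf_mono) auto
  finally show "ereal (- ((norm w)^2) / \<gamma>) \<le> liminf (\<lambda>k. second_diff_quot g x0 v (\<tau> k) (w' k))" .
qed

lemma fbe_le: "fbe f f' g \<gamma> x \<le> ereal (f x) + g x"
  unfolding fbe_def by (rule INF_lower2[of x]) simp_all

lemma second_diff_quot_mono:
  assumes "\<phi>1 (x + t *\<^sub>R w) \<le> \<phi>2 (x + t *\<^sub>R w)" and "\<phi>1 x = ereal c" and "\<phi>2 x = ereal c"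
  shows "second_diff_quot \<phi>1 x v t w \<le> second_diff_quot \<phi>2 x v t w"
  unfolding second_diff_quot_def assms(2,3)
  by (intro ereal_mult_right_mono ereal_minus_mono assms(1)) auto

section \<open>The proximal map near a fixed point\<close>

locale prox_fixed_point =
  fixes g :: "'a::euclidean_space \<Rightarrow> ereal" and x0 v0 :: 'a and g0 \<gamma>1 :: real
  assumes g_not_minf: "\<And>x. g x \<noteq> -\<infinity>" and g_lsc: "lsc_fun g" and g_x0: "g x0 = ereal g0"
    and \<gamma>1_pos: "0 < \<gamma>1" and fixed_point: "x0 \<in> prox \<gamma>1 g (x0 + \<gamma>1 *\<^sub>R v0)"
begin

abbreviation g_diff_quot :: "real \<Rightarrow> 'a \<Rightarrow> ereal" where "g_diff_quot \<equiv> second_diff_quot g x0 v0"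

abbreviation d2g :: "'a \<Rightarrow> ereal" where "d2g \<equiv> second_subderiv g x0 v0"

lemma minorant: "ereal (g0 + v0 \<bullet> (z - x0) - (norm (z - x0))^2 / (2*\<gamma>1)) \<le> g z"
  using prox_fixed_point_minorant[OF fixed_point \<gamma>1_pos, of z] g_x0 by (simp add: add_diff_eq)

lemma d2g_lower_bound: "ereal (- ((norm w)^2) / \<gamma>1) \<le> d2g w"
  using second_subderiv_ge_minorant[of g x0 v0 \<gamma>1] prox_fixed_point_minorant[OF fixed_point]
    \<gamma>1_pos g_x0 by simp

end

locale prox_step = prox_fixed_point +
  fixes \<gamma> :: real
  assumes \<gamma>_pos: "0 < \<gamma>" and \<gamma>_less: "\<gamma> < \<gamma>1"
begin

definition prox_obj :: "'a \<Rightarrow> 'a \<Rightarrow> ereal" where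
  "prox_obj y z = g z + ereal ((norm (z - y))^2 / (2*\<gamma>))"

definition y0 :: 'a where "y0 = x0 + \<gamma> *\<^sub>R v0"

text \<open>\<open>\<mu>\<close> is the curvature of \<open>prox_obj y\<close> around \<open>x0\<close> that survives the quadratic minorant of
  \<open>g\<close>; \<open>\<kappa>\<close> is the resulting calmness constant of the proximal map at \<open>y0\<close>.\<close>

definition \<mu> :: real where "\<mu> = 1 / (2*\<gamma>) - 1 / (2*\<gamma>1)"

definition \<kappa> :: real where "\<kappa> = 1 / (\<gamma> * \<mu>)"

lemma \<mu>_pos: "0 < \<mu>"
  using \<gamma>_pos \<gamma>_less unfolding \<mu>_def by (simp add: frac_less2)

lemma \<kappa>_pos: "0 < \<kappa>"
  using \<gamma>_pos \<mu>_pos unfolding \<kappa>_def by simp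

lemma prox_iff: "x \<in> prox \<gamma> g y \<longleftrightarrow> (\<forall>z. prox_obj y x \<le> prox_obj y z)"
  unfolding prox_def prox_obj_def by simp

lemma prox_obj_x0: "prox_obj y x0 = ereal (g0 + (norm (x0 - y))^2 / (2*\<gamma>))"
  unfolding prox_obj_def g_x0 by simp

lemma prox_obj_growth:
  "prox_obj y x0 + ereal (\<mu> * (norm (z - x0))^2 - norm (y - y0) / \<gamma> * norm (z - x0)) \<le> prox_obj y z"
proof -
  have "(norm (z - y))^2 = (norm (z - x0))^2 + 2 * ((z - x0) \<bullet> (x0 - y)) + (norm (x0 - y))^2"
    using power2_norm_add[of "z - x0" "x0 - y"] by simp
  moreover have "(z - x0) \<bullet> (y0 - y) = (z - x0) \<bullet> (x0 - y) + \<gamma> * (v0 \<bullet> (z - x0))"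
    unfolding y0_def by (simp add: inner_add_right inner_diff_right inner_commute algebra_simps)
  ultimately have "g0 + v0 \<bullet> (z - x0) - (norm (z - x0))^2 / (2*\<gamma>1) + (norm (z - y))^2 / (2*\<gamma>)
      = g0 + (norm (x0 - y))^2 / (2*\<gamma>) + \<mu> * (norm (z - x0))^2 + ((z - x0) \<bullet> (y0 - y)) / \<gamma>"
    using \<gamma>_pos \<gamma>1_pos unfolding \<mu>_def by (simp add: field_simps)
  moreover have "- (norm (y - y0) / \<gamma> * norm (z - x0)) \<le> ((z - x0) \<bullet> (y0 - y)) / \<gamma>"
    using norm_cauchy_schwarz[of "z - x0" "y - y0"] \<gamma>_pos
    by (simp add: inner_diff_right field_simps)
  ultimately have "g0 + (norm (x0 - y))^2 / (2*\<gamma>) + (\<mu> * (norm (z - x0))^2 - norm (y - y0) / \<gamma> * norm (z - x0))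
      \<le> g0 + v0 \<bullet> (z - x0) - (norm (z - x0))^2 / (2*\<gamma>1) + (norm (z - y))^2 / (2*\<gamma>)"
    by linarith
  then have "prox_obj y x0 + ereal (\<mu> * (norm (z - x0))^2 - norm (y - y0) / \<gamma> * norm (z - x0))
      \<le> ereal (g0 + v0 \<bullet> (z - x0) - (norm (z - x0))^2 / (2*\<gamma>1)) + ereal ((norm (z - y))^2 / (2*\<gamma>))"
    unfolding prox_obj_x0 by simp
  also have "\<dots> \<le> prox_obj y z"
    unfolding prox_obj_def by (intro add_right_mono minorant)
  finally show ?thesis .
qed

lemma prox_calm:
  assumes "x \<in> prox \<gamma> g y"
  shows "norm (x - x0) \<le> \<kappa> * norm (y - y0)"
proof -
  have "prox_obj y x0 + ereal (\<mu> * (norm (x - x0))^2 - norm (y - y0) / \<gamma> * norm (x - x0)) \<le> prox_obj y x0"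
    using prox_obj_growth[of y x] assms prox_iff order_trans by blast
  then have "(\<gamma> * \<mu> * norm (x - x0)) * norm (x - x0) \<le> norm (y - y0) * norm (x - x0)"
    using \<gamma>_pos unfolding prox_obj_x0 by (simp add: power2_eq_square field_simps)
  then have "norm (x - x0) = 0 \<or> \<gamma> * \<mu> * norm (x - x0) \<le> norm (y - y0)"
    by (metis mult_right_le_imp_le norm_ge_zero order_le_less)
  then show ?thesis
    using \<gamma>_pos \<mu>_pos unfolding \<kappa>_def by (auto simp: field_simps)
qed

lemma prox_obj_le_liminf:
  assumes "X \<longlonglongrightarrow> z"
  shows "prox_obj y z \<le> liminf (\<lambda>k. prox_obj y (X k))"
proof -
  have c: "(\<lambda>k. ereal ((norm (X k - y))^2 / (2*\<gamma>))) \<longlonglongrightarrow> ereal ((norm (z - y))^2 / (2*\<gamma>))"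
    using \<gamma>_pos by (intro tendsto_ereal tendsto_intros assms) auto
  have "prox_obj y z \<le> ereal ((norm (z - y))^2 / (2*\<gamma>)) + liminf (\<lambda>k. g (X k))"
    unfolding prox_obj_def
    using add_right_mono[OF lsc_fun_le_liminf[OF g_lsc assms], of "ereal ((norm (z - y))^2 / (2*\<gamma>))"]
    by (simp add: add.commute)
  also have "\<dots> = liminf (\<lambda>k. ereal ((norm (X k - y))^2 / (2*\<gamma>)) + g (X k))"
    by (rule ereal_liminf_lim_add[OF c, symmetric]) simp
  also have "\<dots> = liminf (\<lambda>k. prox_obj y (X k))"
    unfolding prox_obj_def by (simp add: add.commute)
  finally show ?thesis .
qed

lemma prox_nonempty: "\<exists>x. x \<in> prox \<gamma> g y"
proof -
  define a where "a = g0 + (norm (x0 - y))^2 / (2*\<gamma>)"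
  define b where "b = norm (y - y0) / \<gamma>"
  have growth: "ereal (a + (\<mu> * (norm (z - x0))^2 - b * norm (z - x0))) \<le> prox_obj y z" for z
    using prox_obj_growth[of y z] unfolding prox_obj_x0 a_def b_def by simp
  have "ereal (a - b^2 / (4*\<mu>)) \<le> prox_obj y z" for z
  proof -
    have "a - b^2 / (4*\<mu>) \<le> a + (\<mu> * (norm (z - x0))^2 - b * norm (z - x0))"
      using quadratic_lower_bound[OF \<mu>_pos, of b "norm (z - x0)"] by simp
    then show ?thesis
      using growth[of z] by (meson ereal_less_eq(3) order_trans)
  qed
  then have "ereal (a - b^2 / (4*\<mu>)) \<le> (INF z. prox_obj y z)"
    by (rule INF_greatest)
  moreover have "(INF z. prox_obj y z) \<le> ereal a"
    unfolding a_def using prox_obj_x0[of y] by (metis INF_lower UNIV_I)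
  ultimately obtain m where m: "(INF z. prox_obj y z) = ereal m" "m \<le> a"
    by (cases "INF z. prox_obj y z") auto
  have "{z. prox_obj y z < ereal (m + 1)} \<subseteq> cball x0 (max 1 ((b + 1) / \<mu>))"
  proof
    fix z assume "z \<in> {z. prox_obj y z < ereal (m + 1)}"
    then have "prox_obj y z < ereal (a + 1)"
      using m(2) by (simp add: order_less_le_trans)
    with growth[of z] have "ereal (a + (\<mu> * (norm (z - x0))^2 - b * norm (z - x0))) < ereal (a + 1)"
      by (rule le_less_trans)
    then show "z \<in> cball x0 (max 1 ((b + 1) / \<mu>))"
      using quadratic_sublevel_bound[OF \<mu>_pos norm_ge_zero, of "z - x0" b]
      by (simp add: dist_norm norm_minus_commute)
  qed
  then obtain x where "\<And>z. prox_obj y x \<le> prox_obj y z"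
    using lsc_attains_min[OF prox_obj_le_liminf m(1)] bounded_subset[OF bounded_cball] by metis
  then show ?thesis
    unfolding prox_iff by blast
qed

definition proxmap :: "'a \<Rightarrow> 'a" where "proxmap y = (SOME x. x \<in> prox \<gamma> g y)"

abbreviation g_real :: "'a \<Rightarrow> real" where "g_real x \<equiv> real_of_ereal (g x)"

lemma proxmap_in_prox: "proxmap y \<in> prox \<gamma> g y"
  unfolding proxmap_def using prox_nonempty by (metis someI_ex)

lemma proxmap_y0: "proxmap y0 = x0"
  using prox_calm[OF proxmap_in_prox[of y0]] by simp

lemma prox_g_real:
  assumes "x \<in> prox \<gamma> g y"
  shows "g x = ereal (g_real x)"
proof -
  have "prox_obj y x \<le> prox_obj y x0"
    using assms prox_iff by blast
  then have "g x \<noteq> \<infinity>"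
    unfolding prox_obj_x0 by (auto simp: prox_obj_def)
  then show ?thesis
    using g_not_minf[of x] by (cases "g x") auto
qed

lemma prox_subgradient:
  assumes "x \<in> prox \<gamma> g y"
  shows "(y - x) /\<^sub>R \<gamma> \<in> limiting_subdiff g x"
proof (intro frechet_subdiff_imp_limiting_subdiff prox_frechet_subgradient[OF assms \<gamma>_pos])
  show "\<bar>g x\<bar> \<noteq> \<infinity>"
    by (subst prox_g_real[OF assms]) simp
qed

text \<open>Rescaling \<open>x = x0 + t w\<close>, \<open>y = y0 + t u\<close> turns \<open>prox_obj\<close> into the second-order difference
  quotient of \<open>g\<close> plus a proximal term, up to an affine change of value.\<close>

lemma prox_obj_rescaled:
  assumes t: "0 < t"
  shows "prox_obj (y0 + t *\<^sub>R u) (x0 + t *\<^sub>R w)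
    = ereal (g0 + t * (v0 \<bullet> u) + \<gamma> * (norm v0)^2 / 2)
      + ereal (t^2 / 2) * (g_diff_quot t w + ereal ((norm (w - u))^2 / \<gamma>))"
proof (cases "g (x0 + t *\<^sub>R w)")
  case (real c)
  have "x0 + t *\<^sub>R w - (y0 + t *\<^sub>R u) = t *\<^sub>R (w - u) - \<gamma> *\<^sub>R v0"
    unfolding y0_def by (simp add: algebra_simps)
  then have "(norm (x0 + t *\<^sub>R w - (y0 + t *\<^sub>R u)))^2
      = t^2 * (norm (w - u))^2 - 2 * t * \<gamma> * ((w - u) \<bullet> v0) + \<gamma>^2 * (norm v0)^2"
    using power2_norm_diff[of "t *\<^sub>R (w - u)" "\<gamma> *\<^sub>R v0"] by (simp add: power_mult_distrib)
  moreover have "c + (t^2 * (norm (w - u))^2 - 2 * t * \<gamma> * ((w - u) \<bullet> v0) + \<gamma>^2 * (norm v0)^2) / (2*\<gamma>)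
      = g0 + t * (v0 \<bullet> u) + \<gamma> * (norm v0)^2 / 2
        + t^2 / 2 * ((c - g0 - t * (v0 \<bullet> w)) * (2 / t^2) + (norm (w - u))^2 / \<gamma>)"
    using t \<gamma>_pos by (simp add: field_simps power2_eq_square inner_diff_left inner_diff_right inner_commute)
  ultimately have "c + (norm (x0 + t *\<^sub>R w - (y0 + t *\<^sub>R u)))^2 / (2*\<gamma>)
      = g0 + t * (v0 \<bullet> u) + \<gamma> * (norm v0)^2 / 2
        + t^2 / 2 * ((c - g0 - t * (v0 \<bullet> w)) * (2 / t^2) + (norm (w - u))^2 / \<gamma>)"
    by simp
  then show ?thesis
    unfolding prox_obj_def second_diff_quot_def g_x0 real by simp
qed (use t g_not_minf in \<open>auto simp: prox_obj_def second_diff_quot_def g_x0\<close>)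

lemma prox_rescaled_min:
  assumes t: "0 < t" and x: "x \<in> prox \<gamma> g (y0 + t *\<^sub>R u)"
  shows "g_diff_quot t ((x - x0) /\<^sub>R t) + ereal ((norm ((x - x0) /\<^sub>R t - u))^2 / \<gamma>)
      \<le> g_diff_quot t w + ereal ((norm (w - u))^2 / \<gamma>)"
proof -
  have "prox_obj (y0 + t *\<^sub>R u) (x0 + t *\<^sub>R ((x - x0) /\<^sub>R t)) \<le> prox_obj (y0 + t *\<^sub>R u) (x0 + t *\<^sub>R w)"
    using x t prox_iff by simp
  then show ?thesis
    unfolding prox_obj_rescaled[OF t] by (rule ereal_add_mult_le_cancel[rotated]) (use t in simp)
qed

lemma prox_rescaled_bound:
  assumes t: "0 < t" and x: "x \<in> prox \<gamma> g (y0 + t *\<^sub>R u)"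
  shows "norm ((x - x0) /\<^sub>R t) \<le> \<kappa> * norm u"
proof -
  have "norm (x - x0) \<le> \<kappa> * (t * norm u)"
    using prox_calm[OF x] t by simp
  then show ?thesis
    unfolding norm_scaleR using t by (simp add: field_simps)
qed

lemma prox_real_le:
  assumes x: "x \<in> prox \<gamma> g y" and z: "g z \<noteq> \<infinity>"
  shows "g_real x + (norm (x - y))^2 / (2*\<gamma>) \<le> g_real z + (norm (z - y))^2 / (2*\<gamma>)"
proof -
  obtain a b where a: "g x = ereal a" and b: "g z = ereal b"
    using prox_g_real[OF x] z g_not_minf[of z] by (cases "g z") auto
  have "prox_obj y x \<le> prox_obj y z"
    using x prox_iff by blast
  then show ?thesis
    unfolding prox_obj_def a b by simp
qed

lemma prox_subgradient_dist:
  assumes x: "x \<in> prox \<gamma> g y"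
  shows "norm ((y - x) /\<^sub>R \<gamma> - v0) \<le> (1 + \<kappa>) * norm (y - y0) / \<gamma>"
proof -
  have "(y - x) /\<^sub>R \<gamma> - v0 = ((y - y0) - (x - x0)) /\<^sub>R \<gamma>"
    unfolding y0_def using \<gamma>_pos by (simp add: algebra_simps)
  then have "norm ((y - x) /\<^sub>R \<gamma> - v0) = norm ((y - y0) - (x - x0)) / \<gamma>"
    using \<gamma>_pos by (simp add: divide_inverse_commute)
  also have "\<dots> \<le> (norm (y - y0) + \<kappa> * norm (y - y0)) / \<gamma>"
    using norm_triangle_ineq4[of "y - y0" "x - x0"] prox_calm[OF x] \<gamma>_pos
    by (intro divide_right_mono) auto
  finally show ?thesis
    by (simp add: algebra_simps)
qed

lemma prox_value_bound:
  assumes x: "x \<in> prox \<gamma> g y"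
  shows "g_real x \<le> g0 + \<kappa> * norm (y - y0) * (\<gamma> * norm v0 + norm (y - y0)) / \<gamma>"
proof -
  define \<rho> where "\<rho> = norm (y - y0)"
  define q where "q = (x - x0) \<bullet> (x0 - y)"
  have "g_real x + (norm (x - y))^2 / (2*\<gamma>) \<le> g0 + (norm (x0 - y))^2 / (2*\<gamma>)"
    using prox_real_le[OF x, of x0] g_x0 by simp
  then have "g_real x \<le> g0 + ((norm (x0 - y))^2 - (norm (x - y))^2) / (2*\<gamma>)"
    by (simp add: diff_divide_distrib)
  also have "(norm (x0 - y))^2 - (norm (x - y))^2 = - ((norm (x - x0))^2) - 2 * q"
    using power2_norm_add[of "x - x0" "x0 - y"] unfolding q_def by simp
  also have "g0 + (- ((norm (x - x0))^2) - 2 * q) / (2*\<gamma>) \<le> g0 + (- 2 * q) / (2*\<gamma>)"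
    using \<gamma>_pos by (intro add_left_mono divide_right_mono) auto
  also have "\<dots> \<le> g0 + (\<kappa> * \<rho>) * (\<gamma> * norm v0 + \<rho>) / \<gamma>"
  proof -
    have "norm (x0 - y) \<le> \<gamma> * norm v0 + \<rho>"
      using norm_triangle_ineq4[of "- (\<gamma> *\<^sub>R v0)" "y - y0"] \<gamma>_pos
      unfolding \<rho>_def y0_def by (simp add: algebra_simps)
    then have "norm (x - x0) * norm (x0 - y) \<le> (\<kappa> * \<rho>) * (\<gamma> * norm v0 + \<rho>)"
      using prox_calm[OF x] \<kappa>_pos unfolding \<rho>_def by (intro mult_mono) auto
    then have "- q \<le> (\<kappa> * \<rho>) * (\<gamma> * norm v0 + \<rho>)"
      using norm_cauchy_schwarz[of "x - x0" "y - x0"] unfolding q_def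
      by (simp add: inner_diff_right norm_minus_commute)
    then show ?thesis
      using divide_right_mono[of "- q" _ \<gamma>] \<gamma>_pos by simp
  qed
  finally show ?thesis
    unfolding \<rho>_def .
qed

definition moreau :: "'a \<Rightarrow> real" where
  "moreau y = g_real (proxmap y) + (norm (proxmap y - y))^2 / (2*\<gamma>)"

lemma prox_obj_proxmap: "prox_obj y (proxmap y) = ereal (moreau y)"
proof -
  obtain a where "g (proxmap y) = ereal a"
    using prox_g_real[OF proxmap_in_prox] by blast
  then show ?thesis
    unfolding prox_obj_def moreau_def by simp
qed

lemma moreau_upper:
  "moreau y' - moreau y \<le> ((y - proxmap y) /\<^sub>R \<gamma>) \<bullet> (y' - y) + (norm (y' - y))^2 / (2*\<gamma>)"
proof -
  have "g (proxmap y) \<noteq> \<infinity>"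
    using prox_g_real[OF proxmap_in_prox[of y]] by (metis PInfty_neq_ereal(2))
  note opt = prox_real_le[OF proxmap_in_prox[of y'] this]
  have N: "(norm (proxmap y - y'))^2
      = (norm (proxmap y - y))^2 - 2 * ((proxmap y - y) \<bullet> (y' - y)) + (norm (y' - y))^2"
    using power2_norm_diff[of "proxmap y - y" "y' - y"] by simp
  have "moreau y' \<le> g_real (proxmap y)
      + ((norm (proxmap y - y))^2 - 2 * ((proxmap y - y) \<bullet> (y' - y)) + (norm (y' - y))^2) / (2*\<gamma>)"
    using opt unfolding moreau_def N .
  then have "moreau y' - moreau y
      \<le> ((norm (proxmap y - y))^2 - 2 * ((proxmap y - y) \<bullet> (y' - y)) + (norm (y' - y))^2) / (2*\<gamma>)
         - (norm (proxmap y - y))^2 / (2*\<gamma>)"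
    unfolding moreau_def[of y] by simp
  also have "\<dots> = ((y - proxmap y) /\<^sub>R \<gamma>) \<bullet> (y' - y) + (norm (y' - y))^2 / (2*\<gamma>)"
    using \<gamma>_pos by (simp add: inner_diff_left field_simps)
  finally show ?thesis .
qed

lemma moreau_lower:
  assumes lip: "C-lipschitz_on U proxmap" and y: "y \<in> U" and y': "y' \<in> U"
  shows "((y - proxmap y) /\<^sub>R \<gamma>) \<bullet> (y' - y) - C / \<gamma> * (norm (y' - y))^2 \<le> moreau y' - moreau y"
proof -
  define d where "d = y' - y"
  have "g (proxmap y') \<noteq> \<infinity>"
    using prox_g_real[OF proxmap_in_prox[of y']] by (metis PInfty_neq_ereal(2))
  note opt = prox_real_le[OF proxmap_in_prox[of y] this]
  have N: "(norm (proxmap y' - y))^2 = (norm (proxmap y' - y'))^2 + 2 * ((proxmap y' - y') \<bullet> d) + (norm d)^2"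
    using power2_norm_add[of "proxmap y' - y'" d] unfolding d_def by simp
  have "(proxmap y' - proxmap y) \<bullet> d \<le> norm (proxmap y' - proxmap y) * norm d"
    by (rule norm_cauchy_schwarz)
  also have "\<dots> \<le> (C * norm d) * norm d"
    using lipschitz_onD[OF lip y' y] unfolding d_def by (intro mult_right_mono) (auto simp: dist_norm)
  finally have C: "(proxmap y' - proxmap y) \<bullet> d \<le> C * (norm d)^2"
    by (simp add: power2_eq_square algebra_simps)
  have "moreau y - moreau y' \<le> (2 * ((proxmap y' - y') \<bullet> d) + (norm d)^2) / (2*\<gamma>)"
    using opt unfolding N moreau_def by (simp add: add_divide_distrib)
  also have "\<dots> = ((proxmap y' - proxmap y) \<bullet> d - (y - proxmap y) \<bullet> d) / \<gamma> - (norm d)^2 / (2*\<gamma>)"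
    using \<gamma>_pos unfolding d_def by (simp add: inner_diff_left inner_diff_right power2_norm_eq_inner field_simps)
  also have "\<dots> \<le> C / \<gamma> * (norm d)^2 - ((y - proxmap y) /\<^sub>R \<gamma>) \<bullet> d"
  proof -
    have "(proxmap y' - proxmap y) \<bullet> d / \<gamma> \<le> C / \<gamma> * (norm d)^2"
      using divide_right_mono[OF C, of \<gamma>] \<gamma>_pos by simp
    moreover have "((y - proxmap y) /\<^sub>R \<gamma>) \<bullet> d = (y - proxmap y) \<bullet> d / \<gamma>"
      by (simp add: divide_inverse_commute)
    moreover have "0 \<le> (norm d)^2 / (2*\<gamma>)"
      using \<gamma>_pos by simp
    ultimately show ?thesis
      by (simp add: diff_divide_distrib)
  qed
  finally show ?thesis
    unfolding d_def by simp
qed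

lemma moreau_has_gradient:
  assumes lip: "C-lipschitz_on U proxmap" and U: "open U" and y: "y \<in> U"
  shows "GDERIV moreau y :> (y - proxmap y) /\<^sub>R \<gamma>"
  unfolding gderiv_def has_derivative_at_alt
proof (intro conjI allI impI bounded_linear_inner_left)
  fix e :: real assume e: "0 < e"
  obtain d0 where d0: "0 < d0" "ball y d0 \<subseteq> U"
    using U y open_contains_ball by blast
  define K where "K = (1/2 + C) / \<gamma>"
  have K: "0 < K"
    unfolding K_def using lipschitz_on_nonneg[OF lip] \<gamma>_pos by simp
  show "\<exists>d>0. \<forall>y'. norm (y' - y) < d \<longrightarrow>
      norm (moreau y' - moreau y - (y' - y) \<bullet> ((y - proxmap y) /\<^sub>R \<gamma>)) \<le> e * norm (y' - y)"
  proof (intro exI conjI allI impI)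
    show "0 < min d0 (e / K)"
      using d0 e K by simp
    fix y' assume y': "norm (y' - y) < min d0 (e / K)"
    then have "y' \<in> U"
      using d0(2) by (auto simp: dist_norm norm_minus_commute)
    define p where "p = (y - proxmap y) /\<^sub>R \<gamma>"
    have "moreau y' - moreau y - (y' - y) \<bullet> p \<le> (norm (y' - y))^2 / (2*\<gamma>)"
      using moreau_upper[of y' y] unfolding p_def by (simp add: inner_commute)
    moreover have "- (C / \<gamma> * (norm (y' - y))^2) \<le> moreau y' - moreau y - (y' - y) \<bullet> p"
      using moreau_lower[OF lip y \<open>y' \<in> U\<close>] unfolding p_def by (simp add: inner_commute)
    moreover have "(norm (y' - y))^2 / (2*\<gamma>) \<le> K * (norm (y' - y))^2"
      "C / \<gamma> * (norm (y' - y))^2 \<le> K * (norm (y' - y))^2"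
      unfolding K_def using \<gamma>_pos lipschitz_on_nonneg[OF lip] by (simp_all add: field_simps)
    ultimately have "\<bar>moreau y' - moreau y - (y' - y) \<bullet> ((y - proxmap y) /\<^sub>R \<gamma>)\<bar> \<le> K * (norm (y' - y))^2"
      unfolding p_def by (simp add: abs_le_iff)
    also have "\<dots> = (K * norm (y' - y)) * norm (y' - y)"
      by (simp add: power2_eq_square)
    also have "\<dots> \<le> e * norm (y' - y)"
      using y' K by (intro mult_right_mono) (simp_all add: field_simps)
    finally show "norm (moreau y' - moreau y - (y' - y) \<bullet> ((y - proxmap y) /\<^sub>R \<gamma>)) \<le> e * norm (y' - y)"
      by simp
  qed
qed

end

section \<open>Differentiability of the proximal map\<close>

locale prox_epi = prox_step +
  fixes S :: "'a set" and M :: "'a \<Rightarrow> 'a"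
  assumes epi: "twice_epi_differentiable g x0 v0" and S: "subspace S" and M: "linear M"
    and d2g_eq: "\<And>w. second_subderiv g x0 v0 w = (if w \<in> S then ereal (w \<bullet> M w) else \<infinity>)"
begin

lemma epi_recovery_seq:
  assumes "\<And>k. 0 < t k" "t \<longlonglongrightarrow> 0"
  obtains W where "W \<longlonglongrightarrow> w" "limsup (\<lambda>k. g_diff_quot (t k) (W k)) \<le> d2g w"
proof -
  obtain h where h: "\<And>\<tau>. (\<forall>k. 0 < \<tau> k) \<and> \<tau> \<longlonglongrightarrow> 0 \<Longrightarrow> epi_converges (\<lambda>k. g_diff_quot (\<tau> k)) h"
    using epi unfolding twice_epi_differentiable_def by blast
  have "h w \<le> d2g w"
    by (rule second_subderiv_geI) (use h in \<open>auto simp: epi_converges_def\<close>)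
  moreover obtain W where "W \<longlonglongrightarrow> w" "limsup (\<lambda>k. g_diff_quot (t k) (W k)) \<le> h w"
    using h[of t] assms unfolding epi_converges_def by blast
  ultimately show ?thesis
    using that order_trans by blast
qed

definition d2_obj :: "'a \<Rightarrow> 'a \<Rightarrow> ereal" where
  "d2_obj u w = d2g w + ereal ((norm (w - u))^2 / \<gamma>)"

definition d2_min :: "'a \<Rightarrow> 'a \<Rightarrow> bool" where
  "d2_min u w \<longleftrightarrow> (\<forall>w'. d2_obj u w \<le> d2_obj u w')"

text \<open>Cluster points of rescaled proximal points solve the second-order proximal subproblem
  (cf. Rockafellar--Wets 13.37): by \<open>prox_rescaled_min\<close>, compare the quotients along the proximal
  points with those along a recovery sequence of the epi-convergence.\<close>

lemma prox_rescaled_cluster: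
  assumes t: "\<And>k. 0 < t k" "t \<longlonglongrightarrow> 0" and u: "uu \<longlonglongrightarrow> u"
    and x: "\<And>k. xs k \<in> prox \<gamma> g (y0 + t k *\<^sub>R uu k)"
    and w: "(\<lambda>k. (xs k - x0) /\<^sub>R t k) \<longlonglongrightarrow> wb"
  shows "d2_min u wb"
  unfolding d2_min_def
proof
  fix w'
  define wk where "wk = (\<lambda>k. (xs k - x0) /\<^sub>R t k)"
  obtain W where W: "W \<longlonglongrightarrow> w'" "limsup (\<lambda>k. g_diff_quot (t k) (W k)) \<le> d2g w'"
    using epi_recovery_seq[OF t] by blast
  have prox_term: "(\<lambda>k. ereal ((norm (V k - uu k))^2 / \<gamma>)) \<longlonglongrightarrow> ereal ((norm (v - u))^2 / \<gamma>)"
    if "V \<longlonglongrightarrow> v" for V v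
    using \<gamma>_pos by (intro tendsto_ereal tendsto_intros that u) auto
  have "ereal ((norm (wb - u))^2 / \<gamma>) + d2g wb
      \<le> ereal ((norm (wb - u))^2 / \<gamma>) + liminf (\<lambda>k. g_diff_quot (t k) (wk k))"
    using second_subderiv_le_liminf[OF t w[folded wk_def]] by (rule add_left_mono)
  also have "\<dots> = liminf (\<lambda>k. ereal ((norm (wk k - uu k))^2 / \<gamma>) + g_diff_quot (t k) (wk k))"
    by (rule ereal_liminf_lim_add[OF prox_term[OF w[folded wk_def]], symmetric]) simp
  also have "\<dots> \<le> liminf (\<lambda>k. ereal ((norm (W k - uu k))^2 / \<gamma>) + g_diff_quot (t k) (W k))"
    using prox_rescaled_min[OF t(1) x] unfolding wk_def
    by (intro Liminf_mono always_eventually allI) (simp add: add.commute)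
  also have "\<dots> \<le> limsup (\<lambda>k. ereal ((norm (W k - uu k))^2 / \<gamma>) + g_diff_quot (t k) (W k))"
    by (rule Liminf_le_Limsup) simp
  also have "\<dots> = ereal ((norm (w' - u))^2 / \<gamma>) + limsup (\<lambda>k. g_diff_quot (t k) (W k))"
    by (rule ereal_limsup_lim_add[OF prox_term[OF W(1)]]) simp
  also have "\<dots> \<le> ereal ((norm (w' - u))^2 / \<gamma>) + d2g w'"
    by (rule add_left_mono[OF W(2)])
  finally show "d2_obj u wb \<le> d2_obj u w'"
    unfolding d2_obj_def by (simp add: add.commute)
qed

definition quad_obj :: "'a \<Rightarrow> 'a \<Rightarrow> real" where
  "quad_obj u w = w \<bullet> M w + (norm (w - u))^2 / \<gamma>"

definition quad_slope :: "'a \<Rightarrow> 'a \<Rightarrow> 'a \<Rightarrow> real" where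
  "quad_slope u w d = d \<bullet> M w + w \<bullet> M d + 2 * (d \<bullet> (w - u)) / \<gamma>"

definition quad_curv :: "'a \<Rightarrow> real" where
  "quad_curv d = d \<bullet> M d + (norm d)^2 / \<gamma>"

lemma d2_obj_eq: "d2_obj u w = (if w \<in> S then ereal (quad_obj u w) else \<infinity>)"
  unfolding d2_obj_def quad_obj_def d2g_eq by simp

lemma quad_curv_lower:
  assumes "d \<in> S"
  shows "2 * \<mu> * (norm d)^2 \<le> quad_curv d"
proof -
  have "- ((norm d)^2) / \<gamma>1 \<le> d \<bullet> M d"
    using d2g_lower_bound[of d] d2g_eq[of d] assms by simp
  moreover have "2 * \<mu> * (norm d)^2 = (norm d)^2 / \<gamma> - (norm d)^2 / \<gamma>1"
    unfolding \<mu>_def by (simp add: field_simps)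
  ultimately show ?thesis
    unfolding quad_curv_def by simp
qed

lemma quad_curv_nonneg: "d \<in> S \<Longrightarrow> 0 \<le> quad_curv d"
  using quad_curv_lower[of d] \<mu>_pos by (smt (verit) mult_nonneg_nonneg zero_le_power2)

lemma quad_obj_expand: "quad_obj u (w + s *\<^sub>R d) = quad_obj u w + s * quad_slope u w d + s^2 * quad_curv d"
proof -
  have "(norm (w + s *\<^sub>R d - u))^2 = (norm (w - u))^2 + 2 * s * (d \<bullet> (w - u)) + s^2 * (norm d)^2"
    using power2_norm_add[of "w - u" "s *\<^sub>R d"] by (simp add: power_mult_distrib inner_commute algebra_simps)
  then show ?thesis
    unfolding quad_obj_def quad_slope_def quad_curv_def using \<gamma>_pos M
    by (simp add: linear_add linear_scale inner_add_left inner_add_right field_simps power2_eq_square)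
qed

lemma d2_min_iff: "d2_min u w \<longleftrightarrow> w \<in> S \<and> (\<forall>d\<in>S. quad_slope u w d = 0)"
proof
  assume min: "d2_min u w"
  have "d2_obj u w \<le> d2_obj u 0"
    using min unfolding d2_min_def by blast
  then have w: "w \<in> S"
    using subspace_0[OF S] unfolding d2_obj_eq by (auto split: if_splits)
  have "quad_slope u w d = 0" if d: "d \<in> S" for d
  proof (rule linear_coeff_eq_0_if_nonneg[of _ "quad_curv d"])
    fix s :: real
    have "w + s *\<^sub>R d \<in> S"
      using S w d by (simp add: subspace_add subspace_mul)
    then have "quad_obj u w \<le> quad_obj u (w + s *\<^sub>R d)"
      using min w unfolding d2_min_def d2_obj_eq by (metis ereal_less_eq(3))
    then show "0 \<le> s * quad_slope u w d + s^2 * quad_curv d"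
      unfolding quad_obj_expand by simp
  qed
  with w show "w \<in> S \<and> (\<forall>d\<in>S. quad_slope u w d = 0)"
    by blast
next
  assume foc: "w \<in> S \<and> (\<forall>d\<in>S. quad_slope u w d = 0)"
  show "d2_min u w"
    unfolding d2_min_def
  proof
    fix w'
    show "d2_obj u w \<le> d2_obj u w'"
    proof (cases "w' \<in> S")
      case True
      then have d: "w' - w \<in> S"
        using foc S by (simp add: subspace_diff)
      have "quad_obj u w' = quad_obj u (w + 1 *\<^sub>R (w' - w))"
        by simp
      also have "\<dots> = quad_obj u w + quad_curv (w' - w)"
        unfolding quad_obj_expand using foc d by simp
      finally show ?thesis
        using quad_curv_nonneg[OF d] foc True unfolding d2_obj_eq by simp
    qed (simp add: d2_obj_eq)
  qed
qed

lemma d2_min_unique: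
  assumes "d2_min u w1" "d2_min u w2"
  shows "w1 = w2"
proof -
  define d where "d = w1 - w2"
  have d: "d \<in> S" and "quad_slope u w1 d = 0" "quad_slope u w2 d = 0"
    using assms S unfolding d2_min_iff d_def by (auto simp: subspace_diff)
  moreover have "quad_slope u w1 d - quad_slope u w2 d = 2 * quad_curv d"
    unfolding quad_slope_def quad_curv_def d_def using \<gamma>_pos M
    by (simp add: linear_diff inner_diff_left inner_diff_right power2_norm_eq_inner field_simps inner_commute)
  ultimately have "2 * \<mu> * (norm d)^2 \<le> 0"
    using quad_curv_lower[OF d] by simp
  then show ?thesis
    using \<mu>_pos unfolding d_def by (simp add: mult_le_0_iff)
qed

lemma d2_min_exists: "\<exists>w. d2_min u w"
proof -
  define t where "t = (\<lambda>k. inverse (real (Suc k)))"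
  have t: "\<And>k. 0 < t k" "t \<longlonglongrightarrow> 0"
    unfolding t_def using LIMSEQ_inverse_real_of_nat by auto
  define xs where "xs = (\<lambda>k. proxmap (y0 + t k *\<^sub>R u))"
  have x: "xs k \<in> prox \<gamma> g (y0 + t k *\<^sub>R u)" for k
    unfolding xs_def by (rule proxmap_in_prox)
  have "bounded (range (\<lambda>k. (xs k - x0) /\<^sub>R t k))"
    using prox_rescaled_bound[OF t(1) x] unfolding bounded_iff by blast
  then obtain wb and r :: "nat \<Rightarrow> nat" where r: "strict_mono r" "((\<lambda>k. (xs k - x0) /\<^sub>R t k) \<circ> r) \<longlonglongrightarrow> wb"
    using bounded_imp_convergent_subsequence by blast
  have "d2_min u wb"
  proof (rule prox_rescaled_cluster[of "t \<circ> r" "\<lambda>k. u" u "xs \<circ> r"])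
    show "(t \<circ> r) \<longlonglongrightarrow> 0"
      using LIMSEQ_subseq_LIMSEQ[OF t(2) r(1)] .
  qed (use t x r(2) in \<open>auto simp: o_def\<close>)
  then show ?thesis
    by blast
qed

definition prox_deriv :: "'a \<Rightarrow> 'a" where "prox_deriv u = (THE w. d2_min u w)"

lemma d2_min_prox_deriv: "d2_min u (prox_deriv u)"
  unfolding prox_deriv_def using d2_min_exists d2_min_unique by (metis theI)

lemma prox_deriv_eqI: "d2_min u w \<Longrightarrow> prox_deriv u = w"
  using d2_min_prox_deriv d2_min_unique by blast

lemma quad_slope_add: "quad_slope (u1 + u2) (w1 + w2) d = quad_slope u1 w1 d + quad_slope u2 w2 d"
  unfolding quad_slope_def using M
  by (simp add: linear_add inner_add_left inner_add_right inner_diff_right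
      add_divide_distrib[symmetric] algebra_simps)

lemma quad_slope_scale: "quad_slope (c *\<^sub>R u) (c *\<^sub>R w) d = c * quad_slope u w d"
  unfolding quad_slope_def using M by (simp add: linear_scale inner_diff_right algebra_simps)

lemma linear_prox_deriv: "linear prox_deriv"
proof (rule linearI)
  fix u1 u2
  have "d2_min (u1 + u2) (prox_deriv u1 + prox_deriv u2)"
    using d2_min_prox_deriv[of u1] d2_min_prox_deriv[of u2] S
    unfolding d2_min_iff quad_slope_add by (simp add: subspace_add)
  then show "prox_deriv (u1 + u2) = prox_deriv u1 + prox_deriv u2"
    by (rule prox_deriv_eqI)
next
  fix c u
  have "d2_min (c *\<^sub>R u) (c *\<^sub>R prox_deriv u)"
    using d2_min_prox_deriv[of u] S unfolding d2_min_iff quad_slope_scale by (simp add: subspace_mul)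
  then show "prox_deriv (c *\<^sub>R u) = c *\<^sub>R prox_deriv u"
    by (rule prox_deriv_eqI)
qed

lemma prox_rescaled_tendsto:
  assumes t: "\<And>k. 0 < t k" "t \<longlonglongrightarrow> 0" and u: "uu \<longlonglongrightarrow> u"
    and x: "\<And>k. xs k \<in> prox \<gamma> g (y0 + t k *\<^sub>R uu k)"
  shows "(\<lambda>k. (xs k - x0) /\<^sub>R t k) \<longlonglongrightarrow> prox_deriv u"
proof (rule LIMSEQ_by_subsequences)
  fix r :: "nat \<Rightarrow> nat" assume r: "strict_mono r"
  obtain B where B: "\<And>k. norm (uu k) \<le> B"
    using convergent_imp_bounded[OF u] unfolding bounded_iff by blast
  have "norm ((xs (r k) - x0) /\<^sub>R t (r k)) \<le> \<kappa> * B" for k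
    using prox_rescaled_bound[OF t(1) x, of "r k"] B[of "r k"] \<kappa>_pos
    by (meson mult_left_mono less_imp_le order_trans)
  then have "bounded (range (\<lambda>k. (xs (r k) - x0) /\<^sub>R t (r k)))"
    unfolding bounded_iff by blast
  then obtain wb and s :: "nat \<Rightarrow> nat"
    where s: "strict_mono s" "(\<lambda>k. (xs (r (s k)) - x0) /\<^sub>R t (r (s k))) \<longlonglongrightarrow> wb"
    using bounded_imp_convergent_subsequence unfolding o_def by blast
  have rs: "strict_mono (r \<circ> s)"
    using r s(1) by (rule strict_mono_o)
  have "d2_min u wb"
  proof (rule prox_rescaled_cluster[of "t \<circ> r \<circ> s" "uu \<circ> r \<circ> s" u "xs \<circ> r \<circ> s"])
    show "(t \<circ> r \<circ> s) \<longlonglongrightarrow> 0" "(uu \<circ> r \<circ> s) \<longlonglongrightarrow> u"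
      using LIMSEQ_subseq_LIMSEQ[OF t(2) rs] LIMSEQ_subseq_LIMSEQ[OF u rs] by (simp_all add: o_assoc)
  qed (use t x s(2) in \<open>auto simp: o_def\<close>)
  then show "\<exists>s. strict_mono s \<and> (\<lambda>n. (xs (r (s n)) - x0) /\<^sub>R t (r (s n))) \<longlonglongrightarrow> prox_deriv u"
    using s prox_deriv_eqI by metis
qed

lemma bounded_linear_prox_deriv: "bounded_linear prox_deriv"
  using linear_prox_deriv by (rule linear_conv_bounded_linear[THEN iffD1])

lemma proxmap_rescaled_remainder:
  assumes t: "\<And>k. 0 < t k" "t \<longlonglongrightarrow> 0" and u: "uu \<longlonglongrightarrow> u"
  shows "(\<lambda>k. (proxmap (y0 + t k *\<^sub>R uu k) - x0) /\<^sub>R t k - prox_deriv (uu k)) \<longlonglongrightarrow> 0"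
  using tendsto_diff[OF prox_rescaled_tendsto[OF t u proxmap_in_prox]
      bounded_linear.tendsto[OF bounded_linear_prox_deriv u]] by simp

lemma proxmap_has_derivative: "(proxmap has_derivative prox_deriv) (at y0)"
  unfolding has_derivative_at
proof (intro conjI bounded_linear_prox_deriv)
  show "((\<lambda>h. norm (proxmap (y0 + h) - proxmap y0 - prox_deriv h) / norm h) \<longlongrightarrow> 0) (at 0)"
    unfolding tendsto_at_iff_sequentially
  proof (intro allI impI)
    fix hs :: "nat \<Rightarrow> 'a" assume hs: "\<forall>i. hs i \<in> UNIV - {0}" "hs \<longlonglongrightarrow> 0"
    show "((\<lambda>h. norm (proxmap (y0 + h) - proxmap y0 - prox_deriv h) / norm h) \<circ> hs) \<longlonglongrightarrow> 0"
    proof (rule LIMSEQ_by_subsequences)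
      fix r :: "nat \<Rightarrow> nat" assume r: "strict_mono r"
      define t where "t k = norm (hs (r k))" for k
      define uu where "uu k = hs (r k) /\<^sub>R t k" for k
      have t: "0 < t k" for k
        unfolding t_def using hs(1) by auto
      have "bounded (range uu)"
        unfolding bounded_iff uu_def t_def using hs(1) by auto
      then obtain u and s :: "nat \<Rightarrow> nat" where s: "strict_mono s" "(\<lambda>k. uu (s k)) \<longlonglongrightarrow> u"
        using bounded_imp_convergent_subsequence unfolding o_def by blast
      have "(\<lambda>k. t (s k)) \<longlonglongrightarrow> 0"
        using tendsto_norm[OF LIMSEQ_subseq_LIMSEQ[OF hs(2) strict_mono_o[OF r s(1)]]]
        unfolding t_def by (simp add: o_def)
      from tendsto_norm[OF proxmap_rescaled_remainder[OF t this s(2)]]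
      have "(\<lambda>k. norm ((proxmap (y0 + t (s k) *\<^sub>R uu (s k)) - x0) /\<^sub>R t (s k) - prox_deriv (uu (s k)))) \<longlonglongrightarrow> 0"
        by simp
      moreover have "norm (proxmap (y0 + hs (r k)) - proxmap y0 - prox_deriv (hs (r k))) / norm (hs (r k))
          = norm ((proxmap (y0 + t k *\<^sub>R uu k) - x0) /\<^sub>R t k - prox_deriv (uu k))" for k
      proof -
        have "hs (r k) = t k *\<^sub>R uu k"
          unfolding uu_def using t[of k] by simp
        then have "proxmap (y0 + hs (r k)) - proxmap y0 - prox_deriv (hs (r k))
            = t k *\<^sub>R ((proxmap (y0 + t k *\<^sub>R uu k) - x0) /\<^sub>R t k - prox_deriv (uu k))"
          unfolding proxmap_y0 using t[of k] linear_prox_deriv by (simp add: linear_scale scaleR_diff_right)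
        then show ?thesis
          using t[of k] unfolding t_def by simp
      qed
      ultimately show "\<exists>s. strict_mono s \<and>
          (\<lambda>n. ((\<lambda>h. norm (proxmap (y0 + h) - proxmap y0 - prox_deriv h) / norm h) \<circ> hs) (r (s n))) \<longlonglongrightarrow> 0"
        using s(1) by auto
    qed
  qed
qed

end

section \<open>Local Lipschitz continuity of the proximal map\<close>

locale prox_reg = prox_step +
  fixes r \<epsilon> :: real
  assumes \<epsilon>_pos: "0 < \<epsilon>" and r\<gamma>_less: "r * \<gamma> < 1"
    and prox_regular: "\<And>x' x v. x' \<in> cball x0 \<epsilon> \<Longrightarrow> v \<in> limiting_subdiff g x \<Longrightarrow>
       norm (x - x0) < \<epsilon> \<Longrightarrow> norm (v - v0) < \<epsilon> \<Longrightarrow> g x \<le> g x0 + ereal \<epsilon> \<Longrightarrow>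
       g x + ereal (v \<bullet> (x' - x) - r / 2 * (norm (x' - x))^2) \<le> g x'"
begin

definition prox_localized :: "'a \<Rightarrow> bool" where
  "prox_localized y \<longleftrightarrow> (\<forall>x. x \<in> prox \<gamma> g y \<longrightarrow>
     norm (x - x0) < \<epsilon> \<and> norm ((y - x) /\<^sub>R \<gamma> - v0) < \<epsilon> \<and> g x \<le> g x0 + ereal \<epsilon>)"

lemma eventually_prox_localized: "eventually prox_localized (nhds y0)"
proof -
  define \<rho> where "\<rho> y = norm (y - y0)" for y
  have "((\<lambda>y. norm (y - y0)) \<longlongrightarrow> norm (y0 - y0)) (nhds y0)"
    by (intro tendsto_intros filterlim_ident)
  then have \<rho>: "(\<rho> \<longlongrightarrow> 0) (nhds y0)"
    unfolding \<rho>_def by simp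
  have "eventually (\<lambda>y. \<kappa> * \<rho> y < \<epsilon>) (nhds y0)"
    using \<epsilon>_pos by (intro order_tendstoD(2)[OF tendsto_mult_right_zero[OF \<rho>]])
  moreover have "eventually (\<lambda>y. (1 + \<kappa>) * \<rho> y / \<gamma> < \<epsilon>) (nhds y0)"
    using \<epsilon>_pos by (intro order_tendstoD(2)[OF tendsto_divide_zero[OF tendsto_mult_right_zero[OF \<rho>]]])
  moreover have "eventually (\<lambda>y. \<kappa> * \<rho> y * (\<gamma> * norm v0 + \<rho> y) / \<gamma> < \<epsilon>) (nhds y0)"
  proof -
    have "((\<lambda>y. \<kappa> * \<rho> y * (\<gamma> * norm v0 + \<rho> y) / \<gamma>) \<longlongrightarrow> \<kappa> * 0 * (\<gamma> * norm v0 + 0) / \<gamma>) (nhds y0)"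
      by (intro tendsto_intros \<rho>) (use \<gamma>_pos in simp)
    then show ?thesis
      using \<epsilon>_pos by (intro order_tendstoD(2)) auto
  qed
  ultimately show ?thesis
  proof eventually_elim
    case (elim y)
    show ?case
      unfolding prox_localized_def
    proof (intro allI impI conjI)
      fix x assume x: "x \<in> prox \<gamma> g y"
      show "norm (x - x0) < \<epsilon>"
        using prox_calm[OF x] elim unfolding \<rho>_def by simp
      show "norm ((y - x) /\<^sub>R \<gamma> - v0) < \<epsilon>"
        using prox_subgradient_dist[OF x] elim unfolding \<rho>_def by simp
      have "g_real x \<le> g0 + \<epsilon>"
        using prox_value_bound[OF x] elim unfolding \<rho>_def by linarith
      then show "g x \<le> g x0 + ereal \<epsilon>"
        unfolding g_x0 by (subst prox_g_real[OF x]) simp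
    qed
  qed
qed

text \<open>Prox-regularity makes the proximal map locally Lipschitz: adding the two prox-regularity
  inequalities at \<open>x1\<close> and \<open>x2\<close> gives strong monotonicity of \<open>y \<mapsto> x\<close>.\<close>

lemma prox_lipschitz_localized:
  assumes y1: "prox_localized y1" and y2: "prox_localized y2"
    and x1: "x1 \<in> prox \<gamma> g y1" and x2: "x2 \<in> prox \<gamma> g y2"
  shows "(1 - r * \<gamma>) * norm (x1 - x2) \<le> norm (y1 - y2)"
proof -
  define v1 where "v1 = (y1 - x1) /\<^sub>R \<gamma>"
  define v2 where "v2 = (y2 - x2) /\<^sub>R \<gamma>"
  have c1: "norm (x1 - x0) < \<epsilon>" "norm (v1 - v0) < \<epsilon>" "g x1 \<le> g x0 + ereal \<epsilon>"
    using y1 x1 unfolding prox_localized_def v1_def by blast+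
  have c2: "norm (x2 - x0) < \<epsilon>" "norm (v2 - v0) < \<epsilon>" "g x2 \<le> g x0 + ereal \<epsilon>"
    using y2 x2 unfolding prox_localized_def v2_def by blast+
  have "g x1 + ereal (v1 \<bullet> (x2 - x1) - r / 2 * (norm (x2 - x1))^2) \<le> g x2"
    using c2(1) by (intro prox_regular c1 prox_subgradient[OF x1, folded v1_def])
      (simp add: dist_norm norm_minus_commute)
  moreover have "g x2 + ereal (v2 \<bullet> (x1 - x2) - r / 2 * (norm (x1 - x2))^2) \<le> g x1"
    using c1(1) by (intro prox_regular c2 prox_subgradient[OF x2, folded v2_def])
      (simp add: dist_norm norm_minus_commute)
  moreover obtain a1 a2 where "g x1 = ereal a1" "g x2 = ereal a2"
    using prox_g_real[OF x1] prox_g_real[OF x2] by blast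
  ultimately have "v1 \<bullet> (x2 - x1) + v2 \<bullet> (x1 - x2) \<le> r * (norm (x1 - x2))^2"
    by (simp add: norm_minus_commute)
  moreover have "v1 \<bullet> (x2 - x1) + v2 \<bullet> (x1 - x2) = ((norm (x1 - x2))^2 - (y1 - y2) \<bullet> (x1 - x2)) / \<gamma>"
    unfolding v1_def v2_def using \<gamma>_pos
    by (simp add: power2_norm_eq_inner inner_diff_left inner_diff_right inner_commute field_simps)
  ultimately have "(1 - r * \<gamma>) * (norm (x1 - x2))^2 \<le> (y1 - y2) \<bullet> (x1 - x2)"
    using \<gamma>_pos by (simp add: field_simps)
  also have "\<dots> \<le> norm (y1 - y2) * norm (x1 - x2)"
    by (rule norm_cauchy_schwarz)
  finally have "((1 - r * \<gamma>) * norm (x1 - x2)) * norm (x1 - x2) \<le> norm (y1 - y2) * norm (x1 - x2)"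
    by (simp add: power2_eq_square algebra_simps)
  then show ?thesis
    by (cases "norm (x1 - x2) = 0") (use r\<gamma>_less in \<open>auto simp: mult_le_cancel_right\<close>)
qed

lemma proxmap_lipschitz_near: "\<exists>\<delta>>0. (1 / (1 - r * \<gamma>))-lipschitz_on (ball y0 \<delta>) proxmap"
proof -
  obtain \<delta> where \<delta>: "0 < \<delta>" "\<And>y. y \<in> ball y0 \<delta> \<Longrightarrow> prox_localized y"
    using eventually_prox_localized unfolding eventually_nhds_metric by (auto simp: dist_commute)
  have "(1 / (1 - r * \<gamma>))-lipschitz_on (ball y0 \<delta>) proxmap"
  proof (rule lipschitz_onI)
    fix y1 y2 assume "y1 \<in> ball y0 \<delta>" "y2 \<in> ball y0 \<delta>"
    then have "(1 - r * \<gamma>) * norm (proxmap y1 - proxmap y2) \<le> norm (y1 - y2)"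
      using \<delta>(2) by (intro prox_lipschitz_localized proxmap_in_prox)
    then show "dist (proxmap y1) (proxmap y2) \<le> 1 / (1 - r * \<gamma>) * dist y1 y2"
      using r\<gamma>_less by (simp add: dist_norm field_simps)
  qed (use r\<gamma>_less in simp)
  with \<delta>(1) show ?thesis
    by blast
qed

lemma eventually_moreau_gradient:
  "eventually (\<lambda>y. GDERIV moreau y :> (y - proxmap y) /\<^sub>R \<gamma>) (nhds y0)"
proof -
  obtain \<delta> where \<delta>: "0 < \<delta>" "(1 / (1 - r * \<gamma>))-lipschitz_on (ball y0 \<delta>) proxmap"
    using proxmap_lipschitz_near by blast
  have "eventually (\<lambda>y. y \<in> ball y0 \<delta>) (nhds y0)"
    using \<delta>(1) by (intro eventually_nhds_in_open) auto
  then show ?thesis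
    by (rule eventually_mono) (rule moreau_has_gradient[OF \<delta>(2) open_ball])
qed

end

section \<open>The forward-backward envelope near a critical point\<close>

locale fb_critical_point = prox_epi + prox_reg +
  fixes f :: "'a \<Rightarrow> real" and f' :: "'a \<Rightarrow> 'a" and L \<epsilon>H :: real and A :: "'a \<Rightarrow> ('a \<Rightarrow>\<^sub>L 'a)"
  assumes grad: "\<And>x. GDERIV f x :> f' x" and lip: "L-lipschitz_on UNIV f'"
    and v0_eq: "v0 = - f' x0" and \<gamma>L_less: "2 * L * \<gamma> < 1"
    and \<epsilon>H_pos: "0 < \<epsilon>H"
    and hess: "\<And>x. x \<in> ball x0 \<epsilon>H \<Longrightarrow> (f' has_derivative blinfun_apply (A x)) (at x)"
    and hess_cont: "continuous_on (ball x0 \<epsilon>H) A"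
begin

abbreviation \<phi> :: "'a \<Rightarrow> ereal" where "\<phi> \<equiv> \<lambda>x. ereal (f x) + g x"

definition fb_step :: "'a \<Rightarrow> 'a" where "fb_step x = proxmap (x - \<gamma> *\<^sub>R f' x)"

definition fbe_real :: "'a \<Rightarrow> real" where
  "fbe_real x = f x - \<gamma> / 2 * (norm (f' x))^2 + moreau (x - \<gamma> *\<^sub>R f' x)"

definition fb_residual :: "'a \<Rightarrow> 'a" where "fb_residual x = (x - fb_step x) /\<^sub>R \<gamma>"

text \<open>The gradient \<open>(I - \<gamma> \<nabla>\<^sup>2f(x))\<^sup>T (x - T x) / \<gamma>\<close> of the envelope and its derivative at \<open>x0\<close>;
  the adjoint avoids any appeal to the symmetry of the Hessian of \<open>f\<close>.\<close>

definition fbe_grad :: "'a \<Rightarrow> 'a" where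
  "fbe_grad x = fb_residual x - \<gamma> *\<^sub>R adjoint (A x) (fb_residual x)"

definition residual_deriv :: "'a \<Rightarrow> 'a" where
  "residual_deriv h = (h - prox_deriv (h - \<gamma> *\<^sub>R A x0 h)) /\<^sub>R \<gamma>"

definition fbe_hess :: "'a \<Rightarrow> 'a" where
  "fbe_hess h = residual_deriv h - \<gamma> *\<^sub>R adjoint (A x0) (residual_deriv h)"

lemma forward_x0: "x0 - \<gamma> *\<^sub>R f' x0 = y0"
  unfolding y0_def by (simp add: v0_eq)

lemma fb_step_x0: "fb_step x0 = x0"
  unfolding fb_step_def forward_x0 proxmap_y0 ..

lemma fb_residual_x0: "fb_residual x0 = 0"
  unfolding fb_residual_def fb_step_x0 by simp

lemma fbe_grad_x0: "fbe_grad x0 = 0"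
  unfolding fbe_grad_def fb_residual_x0 by (simp add: linear_0 blinfun.bounded_linear_right
      bounded_linear.linear adjoint_linear)

lemma fbe_eq: "fbe f f' g \<gamma> x = ereal (fbe_real x)"
proof -
  define y where "y = x - \<gamma> *\<^sub>R f' x"
  define c where "c = f x - \<gamma> / 2 * (norm (f' x))^2"
  have fbe_term: "ereal (f x + f' x \<bullet> (u - x)) + g u + ereal ((norm (u - x))^2 / (2*\<gamma>))
      = ereal c + prox_obj y u" for u
  proof -
    have e: "u - y = (u - x) + \<gamma> *\<^sub>R f' x"
      unfolding y_def by simp
    have "(norm (u - y))^2 = (norm (u - x))^2 + 2 * \<gamma> * ((u - x) \<bullet> f' x) + \<gamma>^2 * (norm (f' x))^2"
      unfolding e power2_norm_add by (simp add: power_mult_distrib)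
    then have "f x + f' x \<bullet> (u - x) + (norm (u - x))^2 / (2*\<gamma>) = c + (norm (u - y))^2 / (2*\<gamma>)"
      unfolding c_def using \<gamma>_pos by (simp add: field_simps power2_eq_square inner_commute)
    then show ?thesis
      unfolding prox_obj_def using g_not_minf[of u] by (cases "g u") auto
  qed
  have "fbe f f' g \<gamma> x = (INF u. ereal c + prox_obj y u)"
    unfolding fbe_def fbe_term ..
  also have "\<dots> = ereal c + prox_obj y (proxmap y)"
  proof (rule antisym)
    show "(INF u. ereal c + prox_obj y u) \<le> ereal c + prox_obj y (proxmap y)"
      by (rule INF_lower) simp
    show "ereal c + prox_obj y (proxmap y) \<le> (INF u. ereal c + prox_obj y u)"
      using proxmap_in_prox[of y] prox_iff by (auto intro!: INF_greatest add_left_mono)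
  qed
  also have "\<dots> = ereal (fbe_real x)"
    unfolding prox_obj_proxmap fbe_real_def c_def y_def by simp
  finally show ?thesis .
qed

lemma fbe_real_x0: "fbe_real x0 = f x0 + g0"
proof -
  have "moreau y0 = g0 + \<gamma> / 2 * (norm v0)^2"
    unfolding moreau_def proxmap_y0 g_x0 using \<gamma>_pos by (simp add: y0_def power2_eq_square field_simps)
  then show ?thesis
    unfolding fbe_real_def forward_x0 v0_eq by simp
qed

lemma forward_tendsto: "((\<lambda>x. x - \<gamma> *\<^sub>R f' x) \<longlongrightarrow> y0) (nhds x0)"
proof -
  have "isCont f' x0"
    using continuous_on_interior[OF lipschitz_on_continuous_on[OF lip]] by simp
  then have "isCont (\<lambda>x. x - \<gamma> *\<^sub>R f' x) x0"
    by (intro continuous_intros)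
  then have "((\<lambda>x. x - \<gamma> *\<^sub>R f' x) \<longlongrightarrow> x0 - \<gamma> *\<^sub>R f' x0) (nhds x0)"
    by (simp add: isCont_def tendsto_nhds_iff)
  then show ?thesis
    unfolding forward_x0 .
qed

lemma fbe_real_has_gradient:
  assumes moreau: "GDERIV moreau (x - \<gamma> *\<^sub>R f' x) :> (x - \<gamma> *\<^sub>R f' x - fb_step x) /\<^sub>R \<gamma>"
    and x: "x \<in> ball x0 \<epsilon>H"
  shows "GDERIV fbe_real x :> fbe_grad x"
proof -
  define p where "p = (x - \<gamma> *\<^sub>R f' x - fb_step x) /\<^sub>R \<gamma>"
  have "((\<lambda>x. x - \<gamma> *\<^sub>R f' x) has_derivative (\<lambda>h. h - \<gamma> *\<^sub>R A x h)) (at x)"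
    by (intro derivative_intros hess[OF x])
  from has_derivative_compose[OF this moreau[unfolded gderiv_def, folded p_def]]
  have "((\<lambda>x. moreau (x - \<gamma> *\<^sub>R f' x)) has_derivative (\<lambda>h. (h - \<gamma> *\<^sub>R A x h) \<bullet> p)) (at x)" .
  moreover have "((\<lambda>x. f' x \<bullet> f' x) has_derivative (\<lambda>h. f' x \<bullet> A x h + A x h \<bullet> f' x)) (at x)"
    by (rule has_derivative_inner[OF hess[OF x] hess[OF x]])
  moreover have "(f has_derivative (\<lambda>h. h \<bullet> f' x)) (at x)"
    using grad[of x] unfolding gderiv_def .
  ultimately have "((\<lambda>x. f x - \<gamma> / 2 * (f' x \<bullet> f' x) + moreau (x - \<gamma> *\<^sub>R f' x)) has_derivative
      (\<lambda>h. h \<bullet> f' x - \<gamma> / 2 * (f' x \<bullet> A x h + A x h \<bullet> f' x) + (h - \<gamma> *\<^sub>R A x h) \<bullet> p)) (at x)"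
    by (intro has_derivative_add has_derivative_diff has_derivative_mult_right)
  moreover have "(\<lambda>h. h \<bullet> f' x - \<gamma> / 2 * (f' x \<bullet> A x h + A x h \<bullet> f' x) + (h - \<gamma> *\<^sub>R A x h) \<bullet> p)
      = (\<lambda>h. h \<bullet> fbe_grad x)"
  proof
    fix h
    have "h \<bullet> adjoint (A x) (fb_residual x) = A x h \<bullet> fb_residual x"
      by (simp add: adjoint_works blinfun.bounded_linear_right bounded_linear.linear)
    then have "h \<bullet> fbe_grad x = h \<bullet> fb_residual x - \<gamma> * (A x h \<bullet> fb_residual x)"
      unfolding fbe_grad_def by (simp add: inner_diff_right)
    moreover have "fb_residual x = f' x + p"
      unfolding fb_residual_def p_def using \<gamma>_pos by (simp add: algebra_simps)
    ultimately show "h \<bullet> f' x - \<gamma> / 2 * (f' x \<bullet> A x h + A x h \<bullet> f' x) + (h - \<gamma> *\<^sub>R A x h) \<bullet> p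
        = h \<bullet> fbe_grad x"
      by (simp add: inner_add_right inner_diff_left inner_commute algebra_simps)
  qed
  moreover have "fbe_real = (\<lambda>x. f x - \<gamma> / 2 * (f' x \<bullet> f' x) + moreau (x - \<gamma> *\<^sub>R f' x))"
    unfolding fbe_real_def[abs_def] by (simp add: power2_norm_eq_inner)
  ultimately show ?thesis
    unfolding gderiv_def by simp
qed

lemma eventually_fbe_gradient: "eventually (\<lambda>x. GDERIV fbe_real x :> fbe_grad x) (nhds x0)"
proof -
  have "eventually (\<lambda>x. GDERIV moreau (x - \<gamma> *\<^sub>R f' x) :> (x - \<gamma> *\<^sub>R f' x - fb_step x) /\<^sub>R \<gamma>) (nhds x0)"
    using forward_tendsto eventually_moreau_gradient unfolding fb_step_def filterlim_iff by blast
  moreover have "eventually (\<lambda>x. x \<in> ball x0 \<epsilon>H) (nhds x0)"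
    using \<epsilon>H_pos by (intro eventually_nhds_in_open) auto
  ultimately show ?thesis
    by eventually_elim (rule fbe_real_has_gradient)
qed

lemma fb_residual_has_derivative: "(fb_residual has_derivative residual_deriv) (at x0)"
proof -
  have "((\<lambda>x. x - \<gamma> *\<^sub>R f' x) has_derivative (\<lambda>h. h - \<gamma> *\<^sub>R A x0 h)) (at x0)"
    using \<epsilon>H_pos by (intro derivative_intros hess) simp
  from has_derivative_compose[OF this proxmap_has_derivative[folded forward_x0]]
  have "(fb_step has_derivative (\<lambda>h. prox_deriv (h - \<gamma> *\<^sub>R A x0 h))) (at x0)"
    unfolding fb_step_def[abs_def] .
  then show ?thesis
    unfolding fb_residual_def[abs_def] residual_deriv_def[abs_def] by (intro derivative_intros)
qed

lemma fbe_grad_has_derivative: "(fbe_grad has_derivative fbe_hess) (at x0)"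
proof -
  have lin: "linear (blinfun_apply B)" for B :: "'a \<Rightarrow>\<^sub>L 'a"
    by (simp add: blinfun.bounded_linear_right bounded_linear.linear)
  have "isCont A x0"
    using continuous_on_interior[OF hess_cont] \<epsilon>H_pos by simp
  then have "isCont (\<lambda>x. A x i) x0" for i
    unfolding isCont_def by (intro blinfun.tendsto tendsto_const)
  then have "((\<lambda>x. A x i \<bullet> fb_residual x) has_derivative (\<lambda>h. A x0 i \<bullet> residual_deriv h)) (at x0)" for i
    by (rule has_derivative_inner_vanishing[OF fb_residual_has_derivative fb_residual_x0])
  then have "((\<lambda>x. fb_residual x - \<gamma> *\<^sub>R (\<Sum>i\<in>Basis. (A x i \<bullet> fb_residual x) *\<^sub>R i)) has_derivative
      (\<lambda>h. residual_deriv h - \<gamma> *\<^sub>R (\<Sum>i\<in>Basis. (A x0 i \<bullet> residual_deriv h) *\<^sub>R i))) (at x0)"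
    by (intro derivative_intros fb_residual_has_derivative) auto
  then show ?thesis
    unfolding fbe_grad_def[abs_def] fbe_hess_def[abs_def] adjoint_eq_sum_Basis[OF lin] .
qed

lemma fbe_twice_diff: "twice_diff_at (fbe f f' g \<gamma>) x0 fbe_hess"
proof -
  obtain \<delta> where \<delta>: "0 < \<delta>" "\<And>x. x \<in> ball x0 \<delta> \<Longrightarrow> GDERIV fbe_real x :> fbe_grad x"
    using eventually_fbe_gradient unfolding eventually_nhds_metric by (auto simp: dist_commute)
  show ?thesis
    unfolding twice_diff_at_def fbe_eq
    by (intro exI[of _ \<delta>] exI[of _ fbe_grad] conjI ballI \<delta>(1) fbe_grad_has_derivative) (simp_all add: \<delta>(2))
qed

lemma fbe_second_subderiv: "second_subderiv (fbe f f' g \<gamma>) x0 0 s = ereal (fbe_hess s \<bullet> s)"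
proof -
  obtain \<delta> where \<delta>: "0 < \<delta>" "\<And>x. x \<in> ball x0 \<delta> \<Longrightarrow> GDERIV fbe_real x :> fbe_grad x"
    using eventually_fbe_gradient unfolding eventually_nhds_metric by (auto simp: dist_commute)
  show ?thesis
    unfolding fbe_eq using second_subderiv_eq_hessian[OF \<delta>(2) \<delta>(1) fbe_grad_x0 fbe_grad_has_derivative] .
qed

lemma fbe_real_at_fb_step:
  "fbe_real x = f x + f' x \<bullet> (fb_step x - x) + (norm (fb_step x - x))^2 / (2*\<gamma>) + g_real (fb_step x)"
proof -
  have e: "fb_step x - (x - \<gamma> *\<^sub>R f' x) = (fb_step x - x) + \<gamma> *\<^sub>R f' x"
    by simp
  have "(norm (fb_step x - (x - \<gamma> *\<^sub>R f' x)))^2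
      = (norm (fb_step x - x))^2 + 2 * \<gamma> * ((fb_step x - x) \<bullet> f' x) + \<gamma>^2 * (norm (f' x))^2"
    unfolding e power2_norm_add by (simp add: power_mult_distrib)
  then show ?thesis
    unfolding fbe_real_def moreau_def fb_step_def[symmetric] using \<gamma>_pos
    by (simp add: field_simps power2_eq_square inner_commute)
qed

lemma phi_fb_step_le: "\<phi> (fb_step x) \<le> ereal (fbe_real x)"
proof -
  have "f (fb_step x) \<le> f x + f' x \<bullet> (fb_step x - x) + L * (norm (fb_step x - x))^2"
    by (rule lipschitz_gradient_upper_bound[OF grad lip])
  also have "L * (norm (fb_step x - x))^2 \<le> 1 / (2*\<gamma>) * (norm (fb_step x - x))^2"
    using \<gamma>L_less \<gamma>_pos by (intro mult_right_mono) (simp_all add: field_simps)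
  finally have "f (fb_step x) + g_real (fb_step x) \<le> fbe_real x"
    unfolding fbe_real_at_fb_step by simp
  moreover obtain a where "g (fb_step x) = ereal a"
    using prox_g_real[OF proxmap_in_prox] unfolding fb_step_def by blast
  ultimately show ?thesis
    by simp
qed

lemma fb_step_calm: "norm (fb_step x - x0) \<le> \<kappa> * (1 + \<gamma> * L) * norm (x - x0)"
proof -
  have eq: "x - \<gamma> *\<^sub>R f' x - y0 = (x - x0) - \<gamma> *\<^sub>R (f' x - f' x0)"
    unfolding forward_x0[symmetric] by (simp add: algebra_simps)
  have "norm (x - \<gamma> *\<^sub>R f' x - y0) \<le> norm (x - x0) + \<gamma> * norm (f' x - f' x0)"
    unfolding eq using norm_triangle_ineq4[of "x - x0" "\<gamma> *\<^sub>R (f' x - f' x0)"] \<gamma>_pos by simp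
  also have "\<dots> \<le> norm (x - x0) + \<gamma> * (L * norm (x - x0))"
    using lipschitz_onD[OF lip, of x x0] \<gamma>_pos by (simp add: dist_norm)
  finally have "norm (x - \<gamma> *\<^sub>R f' x - y0) \<le> (1 + \<gamma> * L) * norm (x - x0)"
    by (simp add: algebra_simps)
  then have "\<kappa> * norm (x - \<gamma> *\<^sub>R f' x - y0) \<le> \<kappa> * ((1 + \<gamma> * L) * norm (x - x0))"
    using \<kappa>_pos by (intro mult_left_mono) auto
  with prox_calm[OF proxmap_in_prox, of "x - \<gamma> *\<^sub>R f' x"] show ?thesis
    unfolding fb_step_def by (simp add: mult.assoc)
qed

lemma fbe_x0: "fbe f f' g \<gamma> x0 = ereal (f x0 + g0)"
  unfolding fbe_eq fbe_real_x0 ..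

lemma zero_limiting_subdiff_phi: "0 \<in> limiting_subdiff \<phi> x0"
  using prox_fixed_point_minorant[OF fixed_point \<gamma>1_pos] g_x0 \<gamma>1_pos
  by (intro frechet_subdiff_imp_limiting_subdiff zero_frechet_subdiff_add_minorant[OF grad])
    (simp_all add: v0_eq)

lemma zero_limiting_subdiff_fbe: "0 \<in> limiting_subdiff (fbe f f' g \<gamma>) x0"
proof -
  have "GDERIV fbe_real x0 :> 0"
    using eventually_nhds_x_imp_x[OF eventually_fbe_gradient] unfolding fbe_grad_x0 .
  then show ?thesis
    unfolding fbe_eq[abs_def] by (intro frechet_subdiff_imp_limiting_subdiff zero_frechet_subdiff_of_gradient)
qed

lemma fbe_quot_tendsto:
  assumes "\<And>k. 0 < \<tau> k" "\<tau> \<longlonglongrightarrow> 0" "w \<longlonglongrightarrow> u"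
  shows "(\<lambda>k. second_diff_quot (fbe f f' g \<gamma>) x0 0 (\<tau> k) (w k)) \<longlonglongrightarrow> ereal (fbe_hess u \<bullet> u)"
proof -
  obtain \<delta> where \<delta>: "0 < \<delta>" "\<And>x. x \<in> ball x0 \<delta> \<Longrightarrow> GDERIV fbe_real x :> fbe_grad x"
    using eventually_fbe_gradient unfolding eventually_nhds_metric by (auto simp: dist_commute)
  have "((\<lambda>p. (fbe_real (x0 + fst p *\<^sub>R snd p) - fbe_real x0) * (2 / (fst p)^2)) \<longlongrightarrow> fbe_hess u \<bullet> u)
      (at_right 0 \<times>\<^sub>F nhds u)"
    by (rule second_diff_quot_tendsto_hessian[OF _ \<delta>(1) fbe_grad_x0 fbe_grad_has_derivative]) (rule \<delta>(2))
  from filterlim_compose[OF this filterlim_at_right_prod_nhds_seq[OF assms]]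
  have "(\<lambda>k. ereal ((fbe_real (x0 + \<tau> k *\<^sub>R w k) - fbe_real x0) * (2 / (\<tau> k)^2))) \<longlonglongrightarrow> ereal (fbe_hess u \<bullet> u)"
    by (intro tendsto_ereal) simp
  then show ?thesis
    unfolding second_diff_quot_def fbe_eq by simp
qed

lemma second_diff_quot_fb_step:
  assumes t: "0 < t"
  shows "second_diff_quot \<phi> x0 0 t ((fb_step (x0 + t *\<^sub>R s) - x0) /\<^sub>R t)
      \<le> second_diff_quot (fbe f f' g \<gamma>) x0 0 t s"
proof -
  have "x0 + t *\<^sub>R ((fb_step (x0 + t *\<^sub>R s) - x0) /\<^sub>R t) = fb_step (x0 + t *\<^sub>R s)"
    using t by simp
  then show ?thesis
    unfolding second_diff_quot_def fbe_eq[of "x0 + _"] fbe_x0 g_x0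
    using phi_fb_step_le[of "x0 + t *\<^sub>R s"] fbe_real_x0
    by (intro ereal_mult_right_mono ereal_minus_mono) auto
qed

lemma hessian_le_second_subderiv_phi: "ereal (fbe_hess u \<bullet> u) \<le> second_subderiv \<phi> x0 0 u"
proof (rule second_subderiv_geI)
  fix \<tau> :: "nat \<Rightarrow> real" and w assume tw: "\<And>k. 0 < \<tau> k" "\<tau> \<longlonglongrightarrow> 0" "w \<longlonglongrightarrow> u"
  have "ereal (fbe_hess u \<bullet> u) = liminf (\<lambda>k. second_diff_quot (fbe f f' g \<gamma>) x0 0 (\<tau> k) (w k))"
    using fbe_quot_tendsto[OF tw] by (rule lim_imp_Liminf[OF sequentially_bot, symmetric])
  also have "\<dots> \<le> liminf (\<lambda>k. second_diff_quot \<phi> x0 0 (\<tau> k) (w k))"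
  proof (intro Liminf_mono always_eventually allI)
    fix k
    show "second_diff_quot (fbe f f' g \<gamma>) x0 0 (\<tau> k) (w k) \<le> second_diff_quot \<phi> x0 0 (\<tau> k) (w k)"
      by (rule second_diff_quot_mono) (use fbe_le fbe_x0 g_x0 in auto)
  qed
  finally show "ereal (fbe_hess u \<bullet> u) \<le> liminf (\<lambda>k. second_diff_quot \<phi> x0 0 (\<tau> k) (w k))" .
qed

text \<open>The rescaled forward-backward steps from \<open>x0 + t s\<close> are bounded (calmness of \<open>T\<close>),
  and along a convergent subsequence the sufficient decrease bounds the quotients of \<open>\<phi>\<close> by those
  of the envelope in direction \<open>s\<close>.\<close>

lemma second_subderiv_phi_le_hessian: "\<exists>w. second_subderiv \<phi> x0 0 w \<le> ereal (fbe_hess s \<bullet> s)"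
proof -
  define t where "t k = inverse (real (Suc k))" for k
  have t: "\<And>k. 0 < t k" "t \<longlonglongrightarrow> 0"
    unfolding t_def using LIMSEQ_inverse_real_of_nat by auto
  define w where "w k = (fb_step (x0 + t k *\<^sub>R s) - x0) /\<^sub>R t k" for k
  have "norm (w k) \<le> \<kappa> * (1 + \<gamma> * L) * norm s" for k
    using fb_step_calm[of "x0 + t k *\<^sub>R s"] t(1)[of k] unfolding w_def norm_scaleR
    by (simp add: field_simps)
  then have "bounded (range w)"
    unfolding bounded_iff by blast
  then obtain w0 and r :: "nat \<Rightarrow> nat" where r: "strict_mono r" "(\<lambda>k. w (r k)) \<longlonglongrightarrow> w0"
    using bounded_imp_convergent_subsequence unfolding o_def by blast
  have tr: "\<And>k. 0 < t (r k)" "(\<lambda>k. t (r k)) \<longlonglongrightarrow> 0"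
    using t LIMSEQ_subseq_LIMSEQ[OF t(2) r(1)] by (auto simp: o_def)
  have "second_subderiv \<phi> x0 0 w0 \<le> liminf (\<lambda>k. second_diff_quot \<phi> x0 0 (t (r k)) (w (r k)))"
    by (rule second_subderiv_le_liminf[OF tr r(2)])
  also have "\<dots> \<le> liminf (\<lambda>k. second_diff_quot (fbe f f' g \<gamma>) x0 0 (t (r k)) s)"
    unfolding w_def using second_diff_quot_fb_step[OF tr(1)] by (intro Liminf_mono always_eventually allI)
  also have "\<dots> = ereal (fbe_hess s \<bullet> s)"
    using fbe_quot_tendsto[OF tr tendsto_const] by (rule lim_imp_Liminf[OF sequentially_bot])
  finally show ?thesis ..
qed

lemma second_subderiv_phi_nonneg_iff:
  "(\<forall>s. 0 \<le> second_subderiv \<phi> x0 0 s) \<longleftrightarrow> (\<forall>s. 0 \<le> fbe_hess s \<bullet> s)"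
proof
  assume nonneg: "\<forall>s. 0 \<le> second_subderiv \<phi> x0 0 s"
  show "\<forall>s. 0 \<le> fbe_hess s \<bullet> s"
  proof
    fix s
    obtain w where "second_subderiv \<phi> x0 0 w \<le> ereal (fbe_hess s \<bullet> s)"
      using second_subderiv_phi_le_hessian by blast
    with nonneg have "0 \<le> ereal (fbe_hess s \<bullet> s)"
      using order_trans by blast
    then show "0 \<le> fbe_hess s \<bullet> s"
      by simp
  qed
next
  assume "\<forall>s. 0 \<le> fbe_hess s \<bullet> s"
  then show "\<forall>s. 0 \<le> second_subderiv \<phi> x0 0 s"
    using hessian_le_second_subderiv_phi order_trans by (metis ereal_less_eq(5))
qed

lemma second_order_stationary_iff:
  "second_order_stationary \<phi> x0 \<longleftrightarrow> second_order_stationary (fbe f f' g \<gamma>) x0"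
  unfolding second_order_stationary_def fbe_second_subderiv second_subderiv_phi_nonneg_iff
  using zero_limiting_subdiff_phi zero_limiting_subdiff_fbe fbe_x0 g_x0 by simp

end

theorem theorem3p8:
  fixes f :: "'a::euclidean_space \<Rightarrow> real"
    and f' :: "'a \<Rightarrow> 'a"
    and Lf :: real
    and g :: "'a \<Rightarrow> ereal"
    and \<gamma>g :: ereal
    and xs :: 'a
  assumes grad: "\<And>x. GDERIV f x :> f' x"
    and lip: "Lf-lipschitz_on UNIV f'"
    and g_proper: "proper_fun g"
    and g_lsc: "lsc_fun g"
    and \<gamma>g_pos: "0 < \<gamma>g"
    and g_pb: "prox_bounded g \<gamma>g"
    and argmin: "\<exists>x. \<forall>y. ereal (f x) + g x \<le> ereal (f y) + g y"
    and crit: "critical_point f' g \<gamma>g xs"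
    and hess_f: "\<exists>\<epsilon>>0. \<exists>H :: 'a \<Rightarrow> ('a \<Rightarrow>\<^sub>L 'a).
                   (\<forall>x\<in>ball xs \<epsilon>. (f' has_derivative blinfun_apply (H x)) (at x)) \<and>
                   continuous_on (ball xs \<epsilon>) H"
    and g_preg: "prox_regular_at g xs (- f' xs)"
    and g_epi: "twice_epi_differentiable g xs (- f' xs)"
    and g_gq: "generalized_quadratic (second_subderiv g xs (- f' xs))"
  shows "\<exists>\<gamma>0>0. \<forall>\<gamma>. 0 < \<gamma> \<and> \<gamma> < \<gamma>0 \<longrightarrow>
           (\<exists>H. twice_diff_at (fbe f f' g \<gamma>) xs H \<and>
              ((\<forall>s. second_subderiv (\<lambda>x. ereal (f x) + g x) xs 0 s \<ge> 0)
                 \<longleftrightarrow> (\<forall>s. H s \<bullet> s \<ge> 0))) \<and>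
           (second_order_stationary (\<lambda>x. ereal (f x) + g x) xs
              \<longleftrightarrow> second_order_stationary (fbe f f' g \<gamma>) xs)"
proof -
  obtain \<gamma>1 where \<gamma>1: "0 < \<gamma>1" "xs \<in> prox \<gamma>1 g (xs + \<gamma>1 *\<^sub>R (- f' xs))"
    using crit unfolding critical_point_def by auto
  obtain g0 where g0: "g xs = ereal g0"
    using g_preg unfolding prox_regular_at_def by (cases "g xs") auto
  obtain r \<epsilon> where r\<epsilon>: "0 \<le> r" "0 < \<epsilon>" "\<forall>x'\<in>cball xs \<epsilon>. \<forall>x v.
      v \<in> limiting_subdiff g x \<and> norm (x - xs) < \<epsilon> \<and> norm (v - - f' xs) < \<epsilon> \<and> g x \<le> g xs + ereal \<epsilon>
      \<longrightarrow> g x + ereal (v \<bullet> (x' - x) - r / 2 * (norm (x' - x))^2) \<le> g x'"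
    using g_preg unfolding prox_regular_at_def by blast
  obtain \<epsilon>H A where hess: "0 < \<epsilon>H" "\<forall>x\<in>ball xs \<epsilon>H. (f' has_derivative blinfun_apply (A x)) (at x)"
    "continuous_on (ball xs \<epsilon>H) A"
    using hess_f by blast
  obtain S M where SM: "subspace S" "linear M"
    "\<forall>s. second_subderiv g xs (- f' xs) s = (if s \<in> S then ereal (s \<bullet> M s) else \<infinity>)"
    using g_gq unfolding generalized_quadratic_def by blast
  have "0 \<le> Lf"
    using lip by (rule lipschitz_on_nonneg)
  define \<gamma>0 where "\<gamma>0 = min \<gamma>1 (1 / (r + 2 * Lf + 1))"
  show ?thesis
  proof (intro exI[of _ \<gamma>0] conjI allI impI)
    show "0 < \<gamma>0"
      unfolding \<gamma>0_def using \<gamma>1 r\<epsilon>(1) \<open>0 \<le> Lf\<close> by simp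
    fix \<gamma> assume \<gamma>: "0 < \<gamma> \<and> \<gamma> < \<gamma>0"
    then have "r * \<gamma> + 2 * Lf * \<gamma> + \<gamma> < 1"
      unfolding \<gamma>0_def using r\<epsilon>(1) \<open>0 \<le> Lf\<close> by (simp add: field_simps)
    moreover have "0 \<le> r * \<gamma>" "0 \<le> Lf * \<gamma>"
      using \<gamma> r\<epsilon>(1) \<open>0 \<le> Lf\<close> by simp_all
    ultimately have "r * \<gamma> < 1" "2 * Lf * \<gamma> < 1"
      using \<gamma> by linarith+
    interpret fb_critical_point g xs "- f' xs" g0 \<gamma>1 \<gamma> S M r \<epsilon> f f' Lf \<epsilon>H A
      by unfold_locales (insert \<gamma>1 g0 r\<epsilon> hess SM \<gamma> \<open>r * \<gamma> < 1\<close> \<open>2 * Lf * \<gamma> < 1\<close> g_proper g_lsc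
          g_epi grad lip, auto simp: proper_fun_def \<gamma>0_def linear_add linear_scale)
    show "\<exists>H. twice_diff_at (fbe f f' g \<gamma>) xs H \<and>
        ((\<forall>s. second_subderiv (\<lambda>x. ereal (f x) + g x) xs 0 s \<ge> 0) \<longleftrightarrow> (\<forall>s. H s \<bullet> s \<ge> 0))"
      using fbe_twice_diff second_subderiv_phi_nonneg_iff by blast
    show "second_order_stationary (\<lambda>x. ereal (f x) + g x) xs \<longleftrightarrow> second_order_stationary (fbe f f' g \<gamma>) xs"
      by (rule second_order_stationary_iff)
  qed
qed

end
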